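(* Let $G$ be a uniform pro-$p$ group, let $R$ and $S$ be Banach–Tate $\mathbb{Z}_p$-algebras, and let $f:R\to S$ be a bounded ring homomorphism. Suppose there is a multiplicative pseudo-uniformizer $\varpi\in R$ such that $f(\varpi)$ is multiplicative in $S$. Then for every $r\in[1/p,1)$ the natural map $\mathcal{D}^r(G,R)\widehat{\otimes}_RS\to\mathcal{D}^r(G,S)$ is an isomorphism of Banach $S$-modules.
   Context: A Banach–Tate $\mathbb{Z}_p$-algebra is a complete non-archimedean normed ring $R$ with a unit $\varpi$ satisfying $|\varpi|<1$ and $|\varpi s|=|\varpi||s|$ for all $s$ (a multiplicative pseudo-uniformizer), together with a ring map $\mathbb{Z}_p\to R$ with $|x|\le|x|_p$. A ring map $f$ is bounded if $|f(r)|\le C|r|$ for some constant $C$. For $G$ uniform with minimal ordered topological generators $g_1,\dots,g_d$, $b_i=\delta_{g_i}-1$, $\mathbf{b}^\alpha=\prod b_i^{\alpha_i}$, $\mathcal{D}^r(G,R)=\{\sum_\alpha d_\alpha\mathbf{b}^\alpha:d_\alpha\in R,\ |d_\alpha|r^{|\alpha|}\to0\}$ with norm $\sup_\alpha|d_\alpha|r^{|\alpha|}$ (the completion of the continuous distribution algebra $\mathcal{D}(G,R)$). $\widehat{\otimes}$ denotes the completed tensor product with respect to the tensor product norm. *)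

theory Defs
  imports "HOL-Analysis.Analysis" "HOL-Algebra.Coset" "HOL-Algebra.Generated_Groups"
begin

definition top_group :: "('g, 'b) monoid_scheme \<Rightarrow> 'g topology \<Rightarrow> bool" where
  "top_group G T \<longleftrightarrow> group G \<and> topspace T = carrier G
     \<and> continuous_map (prod_topology T T) T (\<lambda>(x, y). x \<otimes>\<^bsub>G\<^esub> y)
     \<and> continuous_map T T (\<lambda>x. inv\<^bsub>G\<^esub> x)"

definition pro_p_group :: "nat \<Rightarrow> ('g, 'b) monoid_scheme \<Rightarrow> 'g topology \<Rightarrow> bool" where
  "pro_p_group p G T \<longleftrightarrow> top_group G T \<and> compact_space T \<and> Hausdorff_space T
     \<and> (\<forall>x \<in> topspace T. connected_component_of_set T x = {x})
     \<and> (\<forall>N. N \<lhd> G \<and> openin T N \<longrightarrow> (\<exists>k. card (rcosets\<^bsub>G\<^esub> N) = p ^ k))"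

definition top_generates :: "('g, 'b) monoid_scheme \<Rightarrow> 'g topology \<Rightarrow> 'g set \<Rightarrow> bool" where
  "top_generates G T X \<longleftrightarrow> X \<subseteq> carrier G \<and> T closure_of (generate G X) = carrier G"

definition top_fin_gen :: "('g, 'b) monoid_scheme \<Rightarrow> 'g topology \<Rightarrow> bool" where
  "top_fin_gen G T \<longleftrightarrow> (\<exists>X. finite X \<and> top_generates G T X)"

definition gcomm :: "('g, 'b) monoid_scheme \<Rightarrow> 'g \<Rightarrow> 'g \<Rightarrow> 'g" where
  "gcomm G x y = x \<otimes>\<^bsub>G\<^esub> y \<otimes>\<^bsub>G\<^esub> inv\<^bsub>G\<^esub> x \<otimes>\<^bsub>G\<^esub> inv\<^bsub>G\<^esub> y"

definition powerful :: "nat \<Rightarrow> ('g, 'b) monoid_scheme \<Rightarrow> 'g topology \<Rightarrow> bool" where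
  "powerful p G T \<longleftrightarrow>
     generate G {gcomm G x y | x y. x \<in> carrier G \<and> y \<in> carrier G}
       \<subseteq> T closure_of generate G {x [^]\<^bsub>G\<^esub> (if p = 2 then 4 else p) | x. x \<in> carrier G}"

text \<open>Lower p-series, shifted: lower_p_series p G T i is P_{i+1}(G).\<close>
primrec lower_p_series :: "nat \<Rightarrow> ('g, 'b) monoid_scheme \<Rightarrow> 'g topology \<Rightarrow> nat \<Rightarrow> 'g set" where
  "lower_p_series p G T 0 = carrier G"
| "lower_p_series p G T (Suc i) = T closure_of generate G
     ({x [^]\<^bsub>G\<^esub> p | x. x \<in> lower_p_series p G T i}
      \<union> {gcomm G x y | x y. x \<in> lower_p_series p G T i \<and> y \<in> carrier G})"

definition sub_index :: "('g, 'b) monoid_scheme \<Rightarrow> 'g set \<Rightarrow> 'g set \<Rightarrow> nat" where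
  "sub_index G H K = card (rcosets\<^bsub>G\<lparr>carrier := H\<rparr>\<^esub> K)"

definition uniform_pro_p :: "nat \<Rightarrow> ('g, 'b) monoid_scheme \<Rightarrow> 'g topology \<Rightarrow> bool" where
  "uniform_pro_p p G T \<longleftrightarrow> pro_p_group p G T \<and> top_fin_gen G T \<and> powerful p G T
     \<and> (\<forall>i. sub_index G (lower_p_series p G T i) (lower_p_series p G T (Suc i))
            = sub_index G (lower_p_series p G T 0) (lower_p_series p G T 1))"

text \<open>g_1, ..., g_d (indexed 0..d-1) is a minimal ordered system of topological generators.\<close>
definition min_top_generators :: "('g, 'b) monoid_scheme \<Rightarrow> 'g topology \<Rightarrow> nat \<Rightarrow> (nat \<Rightarrow> 'g) \<Rightarrow> bool" where
  "min_top_generators G T d g \<longleftrightarrow> top_generates G T (g ` {..<d}) \<and> inj_on g {..<d}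
     \<and> (\<forall>X. finite X \<and> top_generates G T X \<longrightarrow> d \<le> card X)"

text \<open>Z_p as compatible systems of residues x n in [0, p^n).\<close>
definition zp :: "nat \<Rightarrow> (nat \<Rightarrow> int) set" where
  "zp p = {x. \<forall>n. 0 \<le> x n \<and> x n < int p ^ n \<and> x (Suc n) mod int p ^ n = x n}"

definition zp_add :: "nat \<Rightarrow> (nat \<Rightarrow> int) \<Rightarrow> (nat \<Rightarrow> int) \<Rightarrow> nat \<Rightarrow> int" where
  "zp_add p x y = (\<lambda>n. (x n + y n) mod int p ^ n)"
definition zp_mult :: "nat \<Rightarrow> (nat \<Rightarrow> int) \<Rightarrow> (nat \<Rightarrow> int) \<Rightarrow> nat \<Rightarrow> int" where
  "zp_mult p x y = (\<lambda>n. (x n * y n) mod int p ^ n)"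
definition zp_one :: "nat \<Rightarrow> nat \<Rightarrow> int" where
  "zp_one p = (\<lambda>n. 1 mod int p ^ n)"

definition padic_abs :: "nat \<Rightarrow> (nat \<Rightarrow> int) \<Rightarrow> real" where
  "padic_abs p x = (if (\<forall>n. x n = 0) then 0
                    else (1 / real p) ^ (LEAST n. x (Suc n) \<noteq> 0))"

definition nonarch_norm :: "('a::comm_ring_1 \<Rightarrow> real) \<Rightarrow> bool" where
  "nonarch_norm N \<longleftrightarrow> (\<forall>x. N x \<ge> 0) \<and> (\<forall>x. N x = 0 \<longleftrightarrow> x = 0)
     \<and> (\<forall>x y. N (x + y) \<le> max (N x) (N y)) \<and> (\<forall>x. N (- x) = N x)
     \<and> (\<forall>x y. N (x * y) \<le> N x * N y)"

definition norm_complete :: "('a::comm_ring_1 \<Rightarrow> real) \<Rightarrow> bool" where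
  "norm_complete N \<longleftrightarrow> (\<forall>u :: nat \<Rightarrow> 'a.
     (\<forall>e>0. \<exists>K. \<forall>m\<ge>K. \<forall>n\<ge>K. N (u m - u n) < e) \<longrightarrow> (\<exists>l. (\<lambda>n. N (u n - l)) \<longlonglongrightarrow> 0))"

definition mult_elem :: "('a::comm_ring_1 \<Rightarrow> real) \<Rightarrow> 'a \<Rightarrow> bool" where
  "mult_elem N w \<longleftrightarrow> (\<forall>s. N (w * s) = N w * N s)"

definition mult_pseudo_unif :: "('a::comm_ring_1 \<Rightarrow> real) \<Rightarrow> 'a \<Rightarrow> bool" where
  "mult_pseudo_unif N w \<longleftrightarrow> (\<exists>v. w * v = 1) \<and> N w < 1 \<and> mult_elem N w"

definition banach_tate_zp :: "nat \<Rightarrow> ('a::comm_ring_1 \<Rightarrow> real) \<Rightarrow> ((nat \<Rightarrow> int) \<Rightarrow> 'a) \<Rightarrow> bool" where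
  "banach_tate_zp p N \<iota> \<longleftrightarrow> nonarch_norm N \<and> norm_complete N
     \<and> (\<exists>w. mult_pseudo_unif N w)
     \<and> \<iota> (zp_one p) = 1
     \<and> (\<forall>x\<in>zp p. \<forall>y\<in>zp p. \<iota> (zp_add p x y) = \<iota> x + \<iota> y \<and> \<iota> (zp_mult p x y) = \<iota> x * \<iota> y)
     \<and> (\<forall>x\<in>zp p. N (\<iota> x) \<le> padic_abs p x)"

definition bounded_ring_hom :: "('a::comm_ring_1 \<Rightarrow> real) \<Rightarrow> ('b::comm_ring_1 \<Rightarrow> real) \<Rightarrow> ('a \<Rightarrow> 'b) \<Rightarrow> bool" where
  "bounded_ring_hom NR NS f \<longleftrightarrow> f 1 = 1 \<and> (\<forall>x y. f (x + y) = f x + f y \<and> f (x * y) = f x * f y)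
     \<and> (\<exists>C. \<forall>x. NS (f x) \<le> C * NR x)"

section \<open>The Banach module D^r(G,R) (coefficients d_alpha of sum d_alpha b^alpha)\<close>

definition multi_idx :: "nat \<Rightarrow> (nat \<Rightarrow> nat) set" where
  "multi_idx d = {\<alpha>. \<forall>i\<ge>d. \<alpha> i = 0}"

definition mdeg :: "nat \<Rightarrow> (nat \<Rightarrow> nat) \<Rightarrow> nat" where
  "mdeg d \<alpha> = (\<Sum>i<d. \<alpha> i)"

definition Dr :: "nat \<Rightarrow> real \<Rightarrow> ('a::comm_ring_1 \<Rightarrow> real) \<Rightarrow> ((nat \<Rightarrow> nat) \<Rightarrow> 'a) set" where
  "Dr d r N = {c. (\<forall>\<alpha>. \<alpha> \<notin> multi_idx d \<longrightarrow> c \<alpha> = 0)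
      \<and> (\<forall>e>0. finite {\<alpha> \<in> multi_idx d. N (c \<alpha>) * r ^ mdeg d \<alpha> \<ge> e})}"

definition dnorm :: "nat \<Rightarrow> real \<Rightarrow> ('a::comm_ring_1 \<Rightarrow> real) \<Rightarrow> ((nat \<Rightarrow> nat) \<Rightarrow> 'a) \<Rightarrow> real" where
  "dnorm d r N c = (SUP \<alpha>\<in>multi_idx d. N (c \<alpha>) * r ^ mdeg d \<alpha>)"

text \<open>Elements of the free abelian group on D^r(G,R) x S are Z-valued functions;
  a list of pairs (m,t) stands for the sum of the pure tensors m \<otimes> t.\<close>
definition tdelta :: "'a \<Rightarrow> 'a \<Rightarrow> int" where
  "tdelta a = (\<lambda>b. if b = a then 1 else 0)"

inductive_set tens_rel :: "nat \<Rightarrow> real \<Rightarrow> ('r::comm_ring_1 \<Rightarrow> real) \<Rightarrow> ('r \<Rightarrow> 's::comm_ring_1)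
    \<Rightarrow> (((nat \<Rightarrow> nat) \<Rightarrow> 'r) \<times> 's \<Rightarrow> int) set"
  for d r NR f where
  tr_zero: "(\<lambda>_. 0) \<in> tens_rel d r NR f"
| tr_diff: "x \<in> tens_rel d r NR f \<Longrightarrow> y \<in> tens_rel d r NR f \<Longrightarrow> (\<lambda>q. x q - y q) \<in> tens_rel d r NR f"
| tr_addL: "m1 \<in> Dr d r NR \<Longrightarrow> m2 \<in> Dr d r NR \<Longrightarrow>
    (\<lambda>q. tdelta (\<lambda>\<alpha>. m1 \<alpha> + m2 \<alpha>, t) q - tdelta (m1, t) q - tdelta (m2, t) q) \<in> tens_rel d r NR f"
| tr_addR: "m \<in> Dr d r NR \<Longrightarrow>
    (\<lambda>q. tdelta (m, t1 + t2) q - tdelta (m, t1) q - tdelta (m, t2) q) \<in> tens_rel d r NR f"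
| tr_scal: "m \<in> Dr d r NR \<Longrightarrow>
    (\<lambda>q. tdelta (\<lambda>\<alpha>. a * m \<alpha>, t) q - tdelta (m, f a * t) q) \<in> tens_rel d r NR f"

definition tfree :: "'a list \<Rightarrow> 'a \<Rightarrow> int" where
  "tfree xs = (\<lambda>q. int (count_list xs q))"

definition tlists :: "nat \<Rightarrow> real \<Rightarrow> ('r::comm_ring_1 \<Rightarrow> real) \<Rightarrow> (((nat \<Rightarrow> nat) \<Rightarrow> 'r) \<times> 's) list set" where
  "tlists d r NR = {xs. \<forall>(m, t) \<in> set xs. m \<in> Dr d r NR}"

definition teq :: "nat \<Rightarrow> real \<Rightarrow> ('r::comm_ring_1 \<Rightarrow> real) \<Rightarrow> ('r \<Rightarrow> 's::comm_ring_1)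
    \<Rightarrow> (((nat \<Rightarrow> nat) \<Rightarrow> 'r) \<times> 's) list \<Rightarrow> (((nat \<Rightarrow> nat) \<Rightarrow> 'r) \<times> 's) list \<Rightarrow> bool" where
  "teq d r NR f xs ys \<longleftrightarrow> (\<lambda>q. tfree xs q - tfree ys q) \<in> tens_rel d r NR f"

definition tneg :: "('m \<times> 's::comm_ring_1) list \<Rightarrow> ('m \<times> 's) list" where
  "tneg xs = map (\<lambda>(m, t). (m, - t)) xs"

definition tdiff :: "('m \<times> 's::comm_ring_1) list \<Rightarrow> ('m \<times> 's) list \<Rightarrow> ('m \<times> 's) list" where
  "tdiff xs ys = xs @ tneg ys"

definition tscale :: "'s::comm_ring_1 \<Rightarrow> ('m \<times> 's) list \<Rightarrow> ('m \<times> 's) list" where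
  "tscale s xs = map (\<lambda>(m, t). (m, s * t)) xs"

definition tcost :: "nat \<Rightarrow> real \<Rightarrow> ('r::comm_ring_1 \<Rightarrow> real) \<Rightarrow> ('s::comm_ring_1 \<Rightarrow> real)
    \<Rightarrow> (((nat \<Rightarrow> nat) \<Rightarrow> 'r) \<times> 's) list \<Rightarrow> real" where
  "tcost d r NR NS ys = Max (insert 0 ((\<lambda>(m, t). dnorm d r NR m * NS t) ` set ys))"

definition tnorm :: "nat \<Rightarrow> real \<Rightarrow> ('r::comm_ring_1 \<Rightarrow> real) \<Rightarrow> ('s::comm_ring_1 \<Rightarrow> real) \<Rightarrow> ('r \<Rightarrow> 's)
    \<Rightarrow> (((nat \<Rightarrow> nat) \<Rightarrow> 'r) \<times> 's) list \<Rightarrow> real" where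
  "tnorm d r NR NS f xs = Inf (tcost d r NR NS ` {ys \<in> tlists d r NR. teq d r NR f ys xs})"

text \<open>Completion: Cauchy sequences of tensors, modulo null sequences.\<close>
definition tcauchy :: "nat \<Rightarrow> real \<Rightarrow> ('r::comm_ring_1 \<Rightarrow> real) \<Rightarrow> ('s::comm_ring_1 \<Rightarrow> real) \<Rightarrow> ('r \<Rightarrow> 's)
    \<Rightarrow> (nat \<Rightarrow> (((nat \<Rightarrow> nat) \<Rightarrow> 'r) \<times> 's) list) \<Rightarrow> bool" where
  "tcauchy d r NR NS f u \<longleftrightarrow> (\<forall>n. u n \<in> tlists d r NR)
     \<and> (\<forall>e>0. \<exists>K. \<forall>m\<ge>K. \<forall>n\<ge>K. tnorm d r NR NS f (tdiff (u m) (u n)) < e)"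

definition cequiv :: "nat \<Rightarrow> real \<Rightarrow> ('r::comm_ring_1 \<Rightarrow> real) \<Rightarrow> ('s::comm_ring_1 \<Rightarrow> real) \<Rightarrow> ('r \<Rightarrow> 's)
    \<Rightarrow> (nat \<Rightarrow> (((nat \<Rightarrow> nat) \<Rightarrow> 'r) \<times> 's) list) \<Rightarrow> (nat \<Rightarrow> (((nat \<Rightarrow> nat) \<Rightarrow> 'r) \<times> 's) list) \<Rightarrow> bool" where
  "cequiv d r NR NS f u v \<longleftrightarrow> (\<lambda>n. tnorm d r NR NS f (tdiff (u n) (v n))) \<longlonglongrightarrow> 0"

definition cnorm :: "nat \<Rightarrow> real \<Rightarrow> ('r::comm_ring_1 \<Rightarrow> real) \<Rightarrow> ('s::comm_ring_1 \<Rightarrow> real) \<Rightarrow> ('r \<Rightarrow> 's)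
    \<Rightarrow> (nat \<Rightarrow> (((nat \<Rightarrow> nat) \<Rightarrow> 'r) \<times> 's) list) \<Rightarrow> real" where
  "cnorm d r NR NS f u = lim (\<lambda>n. tnorm d r NR NS f (u n))"

text \<open>The natural map on pure tensors: (sum d_alpha b^alpha) \<otimes> s \<mapsto> sum f(d_alpha) s b^alpha.\<close>
definition tphi :: "('r \<Rightarrow> 's::comm_ring_1) \<Rightarrow> (((nat \<Rightarrow> nat) \<Rightarrow> 'r) \<times> 's) list \<Rightarrow> (nat \<Rightarrow> nat) \<Rightarrow> 's" where
  "tphi f xs = (\<lambda>\<alpha>. sum_list (map (\<lambda>(m, t). f (m \<alpha>) * t) xs))"

text \<open>nat_map u y: the continuous extension of the natural map sends the class of u to y.\<close>
definition nat_map :: "nat \<Rightarrow> real \<Rightarrow> ('r::comm_ring_1 \<Rightarrow> real) \<Rightarrow> ('s::comm_ring_1 \<Rightarrow> real) \<Rightarrow> ('r \<Rightarrow> 's)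
    \<Rightarrow> (nat \<Rightarrow> (((nat \<Rightarrow> nat) \<Rightarrow> 'r) \<times> 's) list) \<Rightarrow> ((nat \<Rightarrow> nat) \<Rightarrow> 's) \<Rightarrow> bool" where
  "nat_map d r NR NS f u y \<longleftrightarrow> y \<in> Dr d r NS
     \<and> (\<lambda>n. dnorm d r NS (\<lambda>\<alpha>. tphi f (u n) \<alpha> - y \<alpha>)) \<longlonglongrightarrow> 0"

text \<open>The natural map from the completed tensor product to D^r(G,S) is an isomorphism of
  Banach S-modules: a well-defined S-linear bijection, bounded with bounded inverse.\<close>
definition natural_map_iso :: "nat \<Rightarrow> real \<Rightarrow> ('r::comm_ring_1 \<Rightarrow> real) \<Rightarrow> ('s::comm_ring_1 \<Rightarrow> real)
    \<Rightarrow> ('r \<Rightarrow> 's) \<Rightarrow> bool" where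
  "natural_map_iso d r NR NS f \<longleftrightarrow>
     (\<forall>u. tcauchy d r NR NS f u \<longrightarrow> (\<exists>!y. nat_map d r NR NS f u y))
   \<and> (\<forall>u v y. tcauchy d r NR NS f u \<and> tcauchy d r NR NS f v \<and> cequiv d r NR NS f u v
        \<and> nat_map d r NR NS f u y \<longrightarrow> nat_map d r NR NS f v y)
   \<and> (\<forall>u v y. tcauchy d r NR NS f u \<and> tcauchy d r NR NS f v
        \<and> nat_map d r NR NS f u y \<and> nat_map d r NR NS f v y \<longrightarrow> cequiv d r NR NS f u v)
   \<and> (\<forall>y \<in> Dr d r NS. \<exists>u. tcauchy d r NR NS f u \<and> nat_map d r NR NS f u y)
   \<and> (\<forall>u v y z s. tcauchy d r NR NS f u \<and> tcauchy d r NR NS f v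
        \<and> nat_map d r NR NS f u y \<and> nat_map d r NR NS f v z \<longrightarrow>
          nat_map d r NR NS f (\<lambda>n. u n @ v n) (\<lambda>\<alpha>. y \<alpha> + z \<alpha>)
        \<and> nat_map d r NR NS f (\<lambda>n. tscale s (u n)) (\<lambda>\<alpha>. s * y \<alpha>))
   \<and> (\<exists>C. \<forall>u y. tcauchy d r NR NS f u \<and> nat_map d r NR NS f u y
        \<longrightarrow> dnorm d r NS y \<le> C * cnorm d r NR NS f u)
   \<and> (\<exists>C. \<forall>u y. tcauchy d r NR NS f u \<and> nat_map d r NR NS f u y
        \<longrightarrow> cnorm d r NR NS f u \<le> C * dnorm d r NS y)"

end

theory Submission
  imports Defs
begin

(*
  On formal sums of
  pure tensors it is computed coefficientwise by additive functionals that vanish on the defining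
  relations of the tensor product, so it is well defined, and it is bounded because f is.
  Conversely, a formal sum xs is equivalent to sum_{a in F} b^a (x) y_a plus tails of arbitrarily small
  norm, where F is finite and y is the image of xs; as |b^a| <= |1| r^|a|, the tensor norm of xs is at
  most |1| times the norm of y. So the natural map is bi-Lipschitz with dense image (every y is the
  limit of its finite truncations, which are images), and since D^r(G,S) is complete it extends to
  an isomorphism of the completion onto D^r(G,S).
*)

section \<open>Weighted sup norms of coefficient families\<close>

definition wnorm :: "nat \<Rightarrow> real \<Rightarrow> ('a::comm_ring_1 \<Rightarrow> real) \<Rightarrow> ((nat \<Rightarrow> nat) \<Rightarrow> 'a) \<Rightarrow> (nat \<Rightarrow> nat) \<Rightarrow> real"
  where "wnorm d r N c \<alpha> = N (c \<alpha>) * r ^ mdeg d \<alpha>"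

lemma dnorm_eq_SUP_wnorm: "dnorm d r N c = (SUP \<alpha>\<in>multi_idx d. wnorm d r N c \<alpha>)"
  unfolding dnorm_def wnorm_def ..

lemma zero_in_multi_idx: "(\<lambda>_. 0) \<in> multi_idx d"
  unfolding multi_idx_def by simp

lemma Dr_iff: "c \<in> Dr d r N \<longleftrightarrow> (\<forall>\<alpha>. \<alpha> \<notin> multi_idx d \<longrightarrow> c \<alpha> = 0)
    \<and> (\<forall>e>0. finite {\<alpha> \<in> multi_idx d. e \<le> wnorm d r N c \<alpha>})"
  unfolding Dr_def wnorm_def by simp

lemma DrI:
  "(\<And>\<alpha>. \<alpha> \<notin> multi_idx d \<Longrightarrow> c \<alpha> = 0) \<Longrightarrow>
   (\<And>e. e > 0 \<Longrightarrow> finite {\<alpha> \<in> multi_idx d. e \<le> wnorm d r N c \<alpha>}) \<Longrightarrow> c \<in> Dr d r N"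
  unfolding Dr_iff by blast

lemma Dr_vanishes: "c \<in> Dr d r N \<Longrightarrow> \<alpha> \<notin> multi_idx d \<Longrightarrow> c \<alpha> = 0"
  unfolding Dr_iff by blast

lemma finite_wnorm_ge: "c \<in> Dr d r N \<Longrightarrow> e > 0 \<Longrightarrow> finite {\<alpha> \<in> multi_idx d. e \<le> wnorm d r N c \<alpha>}"
  unfolding Dr_iff by blast

lemma bdd_above_wnorm:
  assumes "c \<in> Dr d r N" shows "bdd_above (wnorm d r N c ` multi_idx d)"
proof -
  let ?big = "{\<alpha> \<in> multi_idx d. 1 \<le> wnorm d r N c \<alpha>}"
  have "wnorm d r N c ` multi_idx d \<subseteq> wnorm d r N c ` ?big \<union> {..1}" by force
  moreover have "bdd_above (wnorm d r N c ` ?big \<union> {..1})"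
    using finite_wnorm_ge[OF assms, of 1] by simp
  ultimately show ?thesis by (rule bdd_above_mono[rotated])
qed

lemma wnorm_le_dnorm: "c \<in> Dr d r N \<Longrightarrow> \<alpha> \<in> multi_idx d \<Longrightarrow> wnorm d r N c \<alpha> \<le> dnorm d r N c"
  unfolding dnorm_eq_SUP_wnorm by (rule cSUP_upper) (auto intro: bdd_above_wnorm)

lemma dnorm_le: "(\<And>\<alpha>. \<alpha> \<in> multi_idx d \<Longrightarrow> wnorm d r N c \<alpha> \<le> B) \<Longrightarrow> dnorm d r N c \<le> B"
  unfolding dnorm_eq_SUP_wnorm by (rule cSUP_least) (use zero_in_multi_idx in auto)

lemma Dr_dominated:
  assumes c: "c \<in> Dr d r N" and vanish: "\<And>\<alpha>. \<alpha> \<notin> multi_idx d \<Longrightarrow> c' \<alpha> = 0"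
    and dom: "\<And>\<alpha>. wnorm d r N' c' \<alpha> \<le> K * wnorm d r N c \<alpha>" and K: "K \<ge> 0"
  shows "c' \<in> Dr d r N'" and "dnorm d r N' c' \<le> K * dnorm d r N c"
proof -
  show "c' \<in> Dr d r N'"
  proof (rule DrI[OF vanish])
    fix e :: real assume e: "e > 0"
    show "finite {\<alpha> \<in> multi_idx d. e \<le> wnorm d r N' c' \<alpha>}"
    proof (cases "K = 0")
      case True
      have "\<not> e \<le> wnorm d r N' c' \<alpha>" for \<alpha>
        using dom[of \<alpha>] e True by simp
      then show ?thesis by simp
    next
      case False
      then have Kpos: "K > 0" using K by simp
      have "e / K \<le> wnorm d r N c \<alpha>" if "e \<le> wnorm d r N' c' \<alpha>" for \<alpha>
        using order_trans[OF that dom[of \<alpha>]] Kpos by (simp add: divide_le_eq mult.commute)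
      then have "{\<alpha> \<in> multi_idx d. e \<le> wnorm d r N' c' \<alpha>} \<subseteq> {\<alpha> \<in> multi_idx d. e / K \<le> wnorm d r N c \<alpha>}"
        by blast
      moreover have "finite {\<alpha> \<in> multi_idx d. e / K \<le> wnorm d r N c \<alpha>}"
        using finite_wnorm_ge[OF c] e Kpos by simp
      ultimately show ?thesis by (rule finite_subset)
    qed
  qed
  show "dnorm d r N' c' \<le> K * dnorm d r N c"
  proof (rule dnorm_le)
    fix \<alpha> assume "\<alpha> \<in> multi_idx d"
    then show "wnorm d r N' c' \<alpha> \<le> K * dnorm d r N c"
      using dom[of \<alpha>] mult_left_mono[OF wnorm_le_dnorm[OF c] K] by (meson order_trans)
  qed
qed

locale Dr_space =
  fixes N :: "'a::comm_ring_1 \<Rightarrow> real" and d :: nat and r :: real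
  assumes nonarch: "nonarch_norm N" and r_pos: "r > 0"
begin

lemma N_nonneg: "0 \<le> N x"
  using nonarch unfolding nonarch_norm_def by blast

lemma N_eq_0_iff: "N x = 0 \<longleftrightarrow> x = 0"
  using nonarch unfolding nonarch_norm_def by blast

lemma N_add_le_max: "N (x + y) \<le> max (N x) (N y)"
  using nonarch unfolding nonarch_norm_def by blast

lemma N_minus [simp]: "N (- x) = N x"
  using nonarch unfolding nonarch_norm_def by blast

lemma N_mult_le: "N (x * y) \<le> N x * N y"
  using nonarch unfolding nonarch_norm_def by blast

lemma N_0 [simp]: "N 0 = 0"
  using N_eq_0_iff by blast

lemma N_triangle: "N (x + y) \<le> N x + N y"
  using N_add_le_max[of x y] N_nonneg[of x] N_nonneg[of y] by linarith

lemma wnorm_nonneg: "0 \<le> wnorm d r N c \<alpha>"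
  unfolding wnorm_def using N_nonneg r_pos by simp

lemma wnorm_add_le_max: "wnorm d r N (\<lambda>\<alpha>. a \<alpha> + b \<alpha>) \<alpha> \<le> max (wnorm d r N a \<alpha>) (wnorm d r N b \<alpha>)"
  unfolding wnorm_def using N_add_le_max r_pos
  by (metis max_mult_distrib_right mult_right_mono less_imp_le zero_le_power)

lemma wnorm_diff_le_max: "wnorm d r N (\<lambda>\<alpha>. a \<alpha> - b \<alpha>) \<alpha> \<le> max (wnorm d r N a \<alpha>) (wnorm d r N b \<alpha>)"
  using wnorm_add_le_max[of a "\<lambda>\<alpha>. - b \<alpha>" \<alpha>] unfolding wnorm_def by simp

lemma wnorm_minus [simp]: "wnorm d r N (\<lambda>\<alpha>. - a \<alpha>) \<alpha> = wnorm d r N a \<alpha>"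
  unfolding wnorm_def by simp

lemma wnorm_mult_le: "wnorm d r N (\<lambda>\<alpha>. s * a \<alpha>) \<alpha> \<le> N s * wnorm d r N a \<alpha>"
  unfolding wnorm_def using N_mult_le r_pos by (simp add: mult.assoc mult_right_mono)

lemma Dr_zero: "(\<lambda>_. 0) \<in> Dr d r N"
  by (rule DrI) (auto simp: wnorm_def)

lemma Dr_add:
  assumes a: "a \<in> Dr d r N" and b: "b \<in> Dr d r N" shows "(\<lambda>\<alpha>. a \<alpha> + b \<alpha>) \<in> Dr d r N"
proof (rule DrI)
  fix e :: real assume e: "e > 0"
  have "{\<alpha> \<in> multi_idx d. e \<le> wnorm d r N (\<lambda>\<alpha>. a \<alpha> + b \<alpha>) \<alpha>} \<subseteq>
     {\<alpha> \<in> multi_idx d. e \<le> wnorm d r N a \<alpha>} \<union> {\<alpha> \<in> multi_idx d. e \<le> wnorm d r N b \<alpha>}"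
  proof (intro subsetI)
    fix \<alpha> assume "\<alpha> \<in> {\<alpha> \<in> multi_idx d. e \<le> wnorm d r N (\<lambda>\<alpha>. a \<alpha> + b \<alpha>) \<alpha>}"
    then have "\<alpha> \<in> multi_idx d" "e \<le> max (wnorm d r N a \<alpha>) (wnorm d r N b \<alpha>)"
      using wnorm_add_le_max[of a b \<alpha>] by auto
    then show "\<alpha> \<in> {\<alpha> \<in> multi_idx d. e \<le> wnorm d r N a \<alpha>} \<union> {\<alpha> \<in> multi_idx d. e \<le> wnorm d r N b \<alpha>}"
      unfolding le_max_iff_disj by blast
  qed
  then show "finite {\<alpha> \<in> multi_idx d. e \<le> wnorm d r N (\<lambda>\<alpha>. a \<alpha> + b \<alpha>) \<alpha>}"
    using finite_wnorm_ge[OF a e] finite_wnorm_ge[OF b e] finite_subset by blast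
qed (simp add: Dr_vanishes[OF a] Dr_vanishes[OF b])

lemma Dr_mult: "a \<in> Dr d r N \<Longrightarrow> (\<lambda>\<alpha>. s * a \<alpha>) \<in> Dr d r N"
  by (rule Dr_dominated(1)[where K = "N s"]) (auto simp: Dr_vanishes wnorm_mult_le N_nonneg)

lemma dnorm_mult_le: "a \<in> Dr d r N \<Longrightarrow> dnorm d r N (\<lambda>\<alpha>. s * a \<alpha>) \<le> N s * dnorm d r N a"
  by (rule Dr_dominated(2)[where K = "N s"]) (auto simp: Dr_vanishes wnorm_mult_le N_nonneg)

lemma Dr_minus: "a \<in> Dr d r N \<Longrightarrow> (\<lambda>\<alpha>. - a \<alpha>) \<in> Dr d r N"
  by (rule Dr_dominated(1)[where K = 1]) (auto simp: Dr_vanishes)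

lemma Dr_diff: "a \<in> Dr d r N \<Longrightarrow> b \<in> Dr d r N \<Longrightarrow> (\<lambda>\<alpha>. a \<alpha> - b \<alpha>) \<in> Dr d r N"
  using Dr_add[OF _ Dr_minus, of a b] by simp

lemma Dr_restrict: "c \<in> Dr d r N \<Longrightarrow> (\<lambda>\<beta>. if P \<beta> then c \<beta> else 0) \<in> Dr d r N"
  by (rule Dr_dominated(1)[where K = 1]) (auto simp: Dr_vanishes wnorm_def wnorm_nonneg[unfolded wnorm_def])

lemma Dr_sum: "finite F \<Longrightarrow> (\<And>i. i \<in> F \<Longrightarrow> c i \<in> Dr d r N) \<Longrightarrow> (\<lambda>\<beta>. \<Sum>i\<in>F. c i \<beta>) \<in> Dr d r N"
  by (induction F rule: finite_induct) (auto intro: Dr_zero Dr_add)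

lemma dnorm_nonneg: "c \<in> Dr d r N \<Longrightarrow> 0 \<le> dnorm d r N c"
  using wnorm_le_dnorm[OF _ zero_in_multi_idx] wnorm_nonneg order_trans by blast

lemma dnorm_add_le_max:
  assumes "a \<in> Dr d r N" "b \<in> Dr d r N"
  shows "dnorm d r N (\<lambda>\<alpha>. a \<alpha> + b \<alpha>) \<le> max (dnorm d r N a) (dnorm d r N b)"
  using wnorm_add_le_max[of a b] max.mono[OF wnorm_le_dnorm[OF assms(1)] wnorm_le_dnorm[OF assms(2)]]
  by (blast intro: dnorm_le order_trans)

lemma dnorm_minus [simp]: "dnorm d r N (\<lambda>\<alpha>. - a \<alpha>) = dnorm d r N a"
  unfolding dnorm_eq_SUP_wnorm by simp

lemma N_le_dnorm_div:
  "c \<in> Dr d r N \<Longrightarrow> \<alpha> \<in> multi_idx d \<Longrightarrow> N (c \<alpha>) \<le> dnorm d r N c / r ^ mdeg d \<alpha>"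
  using wnorm_le_dnorm[of c d r N \<alpha>] r_pos by (simp add: wnorm_def le_divide_eq)

abbreviation ddist :: "((nat \<Rightarrow> nat) \<Rightarrow> 'a) \<Rightarrow> ((nat \<Rightarrow> nat) \<Rightarrow> 'a) \<Rightarrow> real" where
  "ddist a b \<equiv> dnorm d r N (\<lambda>\<alpha>. a \<alpha> - b \<alpha>)"

lemma ddist_commute: "ddist a b = ddist b a"
  using dnorm_minus[of "\<lambda>\<alpha>. b \<alpha> - a \<alpha>"] by simp

lemma ddist_nonneg: "a \<in> Dr d r N \<Longrightarrow> b \<in> Dr d r N \<Longrightarrow> 0 \<le> ddist a b"
  by (intro dnorm_nonneg Dr_diff)

lemma ddist_triangle:
  assumes "a \<in> Dr d r N" "b \<in> Dr d r N" "c \<in> Dr d r N"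
  shows "ddist a c \<le> ddist a b + ddist b c"
proof -
  have "ddist a c \<le> max (ddist a b) (ddist b c)"
    using dnorm_add_le_max[OF Dr_diff[OF assms(1,2)] Dr_diff[OF assms(2,3)]] by simp
  moreover have "0 \<le> ddist a b" "0 \<le> ddist b c" using ddist_nonneg assms by auto
  ultimately show ?thesis by linarith
qed

lemma dnorm_diff_abs_le:
  assumes "a \<in> Dr d r N" "b \<in> Dr d r N"
  shows "\<bar>dnorm d r N a - dnorm d r N b\<bar> \<le> ddist a b"
  using ddist_triangle[OF assms Dr_zero] ddist_triangle[OF assms(2,1) Dr_zero] ddist_commute[of a b]
  by simp

lemma ddist_le_0_imp_eq:
  assumes a: "a \<in> Dr d r N" and b: "b \<in> Dr d r N" and le: "ddist a b \<le> 0"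
  shows "a = b"
proof
  fix \<alpha>
  show "a \<alpha> = b \<alpha>"
  proof (cases "\<alpha> \<in> multi_idx d")
    case True
    have "N (a \<alpha> - b \<alpha>) * r ^ mdeg d \<alpha> \<le> 0"
      using wnorm_le_dnorm[OF Dr_diff[OF a b] True] le by (simp add: wnorm_def)
    moreover have "r ^ mdeg d \<alpha> > 0" using r_pos by simp
    ultimately have "N (a \<alpha> - b \<alpha>) \<le> 0" by (simp add: mult_le_0_iff)
    then have "N (a \<alpha> - b \<alpha>) = 0" using N_nonneg[of "a \<alpha> - b \<alpha>"] by linarith
    then show ?thesis unfolding N_eq_0_iff by simp
  qed (simp add: Dr_vanishes[OF a] Dr_vanishes[OF b])
qed

lemma Dr_uniform_limit:
  assumes a: "\<And>n. a n \<in> Dr d r N" and y_vanish: "\<And>\<alpha>. \<alpha> \<notin> multi_idx d \<Longrightarrow> y \<alpha> = 0"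
    and unif: "\<And>e. e > 0 \<Longrightarrow> \<exists>K. \<forall>n\<ge>K. \<forall>\<alpha>\<in>multi_idx d. wnorm d r N (\<lambda>\<alpha>. a n \<alpha> - y \<alpha>) \<alpha> \<le> e"
  shows "y \<in> Dr d r N" and "(\<lambda>n. ddist (a n) y) \<longlonglongrightarrow> 0"
proof -
  show y: "y \<in> Dr d r N"
  proof (rule DrI[OF y_vanish])
    fix e :: real assume e: "e > 0"
    obtain K where K: "\<forall>\<alpha>\<in>multi_idx d. wnorm d r N (\<lambda>\<alpha>. a K \<alpha> - y \<alpha>) \<alpha> \<le> e / 2"
      using unif[of "e / 2"] e by auto
    have "e \<le> wnorm d r N (a K) \<alpha>" if "\<alpha> \<in> multi_idx d" "e \<le> wnorm d r N y \<alpha>" for \<alpha>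
    proof -
      have "wnorm d r N y \<alpha> \<le> max (wnorm d r N (a K) \<alpha>) (wnorm d r N (\<lambda>\<alpha>. a K \<alpha> - y \<alpha>) \<alpha>)"
        using wnorm_diff_le_max[of "a K" "\<lambda>\<alpha>. a K \<alpha> - y \<alpha>" \<alpha>] by simp
      moreover have "wnorm d r N (\<lambda>\<alpha>. a K \<alpha> - y \<alpha>) \<alpha> \<le> e / 2" using K that(1) by blast
      ultimately show ?thesis using that(2) e by (simp add: max_def split: if_split_asm)
    qed
    then have "{\<alpha> \<in> multi_idx d. e \<le> wnorm d r N y \<alpha>} \<subseteq> {\<alpha> \<in> multi_idx d. e \<le> wnorm d r N (a K) \<alpha>}"
      by blast
    then show "finite {\<alpha> \<in> multi_idx d. e \<le> wnorm d r N y \<alpha>}"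
      using finite_wnorm_ge[OF a e] finite_subset by blast
  qed
  show "(\<lambda>n. ddist (a n) y) \<longlonglongrightarrow> 0"
  proof (rule LIMSEQ_I)
    fix e :: real assume e: "e > 0"
    obtain K where K: "\<forall>n\<ge>K. \<forall>\<alpha>\<in>multi_idx d. wnorm d r N (\<lambda>\<alpha>. a n \<alpha> - y \<alpha>) \<alpha> \<le> e / 2"
      using unif[of "e / 2"] e by auto
    have "norm (ddist (a n) y) < e" if "n \<ge> K" for n
      using dnorm_le[of d r N "\<lambda>\<alpha>. a n \<alpha> - y \<alpha>" "e / 2"] K that ddist_nonneg[OF a y] e by auto
    then show "\<exists>K. \<forall>n\<ge>K. norm (ddist (a n) y - 0) < e" by auto
  qed
qed

lemma N_diff_le_of_ddist_less:
  assumes "a \<in> Dr d r N" "b \<in> Dr d r N" "\<alpha> \<in> multi_idx d" "ddist a b < e"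
  shows "N (a \<alpha> - b \<alpha>) \<le> e / r ^ mdeg d \<alpha>"
proof -
  have "N (a \<alpha> - b \<alpha>) \<le> ddist a b / r ^ mdeg d \<alpha>"
    using N_le_dnorm_div[OF Dr_diff[OF assms(1,2)] assms(3)] .
  also have "\<dots> \<le> e / r ^ mdeg d \<alpha>"
    using assms(4) r_pos by (simp add: divide_right_mono)
  finally show ?thesis .
qed

lemma Dr_cauchy_coeff_convergent:
  assumes complete: "norm_complete N" and a: "\<And>n. a n \<in> Dr d r N"
    and cauchy: "\<And>e. e > 0 \<Longrightarrow> \<exists>K. \<forall>m\<ge>K. \<forall>n\<ge>K. ddist (a m) (a n) < e"
    and \<alpha>: "\<alpha> \<in> multi_idx d"
  shows "\<exists>l. (\<lambda>n. N (a n \<alpha> - l)) \<longlonglongrightarrow> 0"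
proof -
  have "\<exists>K. \<forall>m\<ge>K. \<forall>n\<ge>K. N (a m \<alpha> - a n \<alpha>) < e" if e: "e > 0" for e
  proof -
    have r_pow: "r ^ mdeg d \<alpha> > 0" using r_pos by simp
    then obtain K where K: "\<forall>m\<ge>K. \<forall>n\<ge>K. ddist (a m) (a n) < e * r ^ mdeg d \<alpha> / 2"
      using cauchy[of "e * r ^ mdeg d \<alpha> / 2"] e by auto
    have "N (a m \<alpha> - a n \<alpha>) < e" if "m \<ge> K" "n \<ge> K" for m n
    proof -
      have "N (a m \<alpha> - a n \<alpha>) \<le> e * r ^ mdeg d \<alpha> / 2 / r ^ mdeg d \<alpha>"
        using N_diff_le_of_ddist_less[OF a a \<alpha> K[rule_format, OF that]] .
      also have "\<dots> < e" using e r_pow by simp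
      finally show ?thesis .
    qed
    then show ?thesis by blast
  qed
  moreover have "(\<forall>e>0. \<exists>K. \<forall>m\<ge>K. \<forall>n\<ge>K. N (a m \<alpha> - a n \<alpha>) < e) \<longrightarrow> (\<exists>l. (\<lambda>n. N (a n \<alpha> - l)) \<longlonglongrightarrow> 0)"
    using complete unfolding norm_complete_def by (rule spec)
  ultimately show ?thesis by blast
qed

lemma Dr_cauchy_uniform_limit:
  assumes a: "\<And>n. a n \<in> Dr d r N"
    and cauchy: "\<And>e. e > 0 \<Longrightarrow> \<exists>K. \<forall>m\<ge>K. \<forall>n\<ge>K. ddist (a m) (a n) < e"
    and y_lim: "\<And>\<alpha>. \<alpha> \<in> multi_idx d \<Longrightarrow> (\<lambda>n. N (a n \<alpha> - y \<alpha>)) \<longlonglongrightarrow> 0"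
    and e: "e > 0"
  shows "\<exists>K. \<forall>n\<ge>K. \<forall>\<alpha>\<in>multi_idx d. wnorm d r N (\<lambda>\<alpha>. a n \<alpha> - y \<alpha>) \<alpha> \<le> e"
proof -
  obtain K where K: "\<forall>m\<ge>K. \<forall>n\<ge>K. ddist (a m) (a n) < e" using cauchy[OF e] by blast
  have "wnorm d r N (\<lambda>\<alpha>. a n \<alpha> - y \<alpha>) \<alpha> \<le> e" if n: "n \<ge> K" and \<alpha>: "\<alpha> \<in> multi_idx d" for n \<alpha>
  proof -
    have lim: "(\<lambda>m. e / r ^ mdeg d \<alpha> + N (a m \<alpha> - y \<alpha>)) \<longlonglongrightarrow> e / r ^ mdeg d \<alpha> + 0"
      by (intro tendsto_intros y_lim[OF \<alpha>])
    have "N (a n \<alpha> - y \<alpha>) \<le> e / r ^ mdeg d \<alpha> + N (a m \<alpha> - y \<alpha>)" if "m \<ge> K" for m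
      using N_triangle[of "a n \<alpha> - a m \<alpha>" "a m \<alpha> - y \<alpha>"]
        N_diff_le_of_ddist_less[OF a a \<alpha> K[rule_format, OF n that]] by simp
    then have "N (a n \<alpha> - y \<alpha>) \<le> e / r ^ mdeg d \<alpha> + 0"
      by (intro LIMSEQ_le_const[OF lim]) blast
    then show ?thesis using r_pos by (simp add: wnorm_def le_divide_eq)
  qed
  then show ?thesis by blast
qed

lemma Dr_complete:
  assumes complete: "norm_complete N" and a: "\<And>n. a n \<in> Dr d r N"
    and cauchy: "\<And>e. e > 0 \<Longrightarrow> \<exists>K. \<forall>m\<ge>K. \<forall>n\<ge>K. ddist (a m) (a n) < e"
  shows "\<exists>y \<in> Dr d r N. (\<lambda>n. ddist (a n) y) \<longlonglongrightarrow> 0"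
proof -
  define y where "y \<alpha> = (if \<alpha> \<in> multi_idx d then SOME l. (\<lambda>n. N (a n \<alpha> - l)) \<longlonglongrightarrow> 0 else 0)" for \<alpha>
  have y_lim: "(\<lambda>n. N (a n \<alpha> - y \<alpha>)) \<longlonglongrightarrow> 0" if "\<alpha> \<in> multi_idx d" for \<alpha>
    using someI_ex[OF Dr_cauchy_coeff_convergent[OF complete a cauchy that]] that
    unfolding y_def by simp
  have y_vanish: "\<alpha> \<notin> multi_idx d \<Longrightarrow> y \<alpha> = 0" for \<alpha>
    unfolding y_def by simp
  have "y \<in> Dr d r N" "(\<lambda>n. ddist (a n) y) \<longlonglongrightarrow> 0"
    using Dr_uniform_limit[OF a y_vanish Dr_cauchy_uniform_limit[OF a cauchy y_lim]] by blast+
  then show ?thesis by blast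
qed

end

section \<open>Formal sums of pure tensors\<close>

definition tsupport :: "('a \<Rightarrow> int) \<Rightarrow> 'a set" where
  "tsupport c = {q. c q \<noteq> 0}"

lemma finite_support_diff [simp]:
  "finite (tsupport x) \<Longrightarrow> finite (tsupport y) \<Longrightarrow> finite (tsupport (\<lambda>q. x q - y q))"
  by (rule finite_subset[of _ "tsupport x \<union> tsupport y"]) (auto simp: tsupport_def)

lemma finite_support_tdelta [simp]: "finite (tsupport (tdelta a))"
  unfolding tsupport_def tdelta_def by simp

lemma finite_support_tfree: "finite (tsupport (tfree xs))"
  by (rule finite_subset[of _ "set xs"]) (auto simp: tsupport_def tfree_def count_list_0_iff)

lemma tfree_Nil [simp]: "tfree [] = (\<lambda>_. 0)"
  unfolding tfree_def by simp

lemma tfree_Cons: "tfree (x # xs) = (\<lambda>q. tdelta x q + tfree xs q)"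
  unfolding tfree_def tdelta_def by auto

lemma tfree_append: "tfree (xs @ ys) = (\<lambda>q. tfree xs q + tfree ys q)"
  unfolding tfree_def by simp

lemma tfree_map_distinct: "distinct L \<Longrightarrow> tfree (map h L) = (\<lambda>q. \<Sum>a\<in>set L. tdelta (h a) q)"
  by (induction L) (auto simp: tfree_Cons)

lemma tlists_Cons [simp]: "(m, t) # xs \<in> tlists d r NR \<longleftrightarrow> m \<in> Dr d r NR \<and> xs \<in> tlists d r NR"
  unfolding tlists_def by auto

lemma tlists_append [simp]: "xs @ ys \<in> tlists d r NR \<longleftrightarrow> xs \<in> tlists d r NR \<and> ys \<in> tlists d r NR"
  unfolding tlists_def by auto

lemma tlists_tneg: "xs \<in> tlists d r NR \<Longrightarrow> tneg xs \<in> tlists d r NR"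
  unfolding tlists_def tneg_def by auto

lemma tlists_tscale: "xs \<in> tlists d r NR \<Longrightarrow> tscale s xs \<in> tlists d r NR"
  unfolding tlists_def tscale_def by auto

lemma tlists_tdiff: "xs \<in> tlists d r NR \<Longrightarrow> ys \<in> tlists d r NR \<Longrightarrow> tdiff xs ys \<in> tlists d r NR"
  unfolding tdiff_def by (simp add: tlists_tneg)

locale natural_map_setting =
  fixes d :: nat and r :: real and NR :: "'r::comm_ring_1 \<Rightarrow> real" and NS :: "'s::comm_ring_1 \<Rightarrow> real"
    and f :: "'r \<Rightarrow> 's"
  assumes NR_nonarch: "nonarch_norm NR" and NS_nonarch: "nonarch_norm NS" and r_pos: "r > 0"
    and f_bounded_hom: "bounded_ring_hom NR NS f" and NS_complete: "norm_complete NS"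
begin

sublocale R: Dr_space NR d r using NR_nonarch r_pos by unfold_locales
sublocale S: Dr_space NS d r using NS_nonarch r_pos by unfold_locales

lemma f_add: "f (x + y) = f x + f y"
  using f_bounded_hom unfolding bounded_ring_hom_def by blast

lemma f_mult: "f (x * y) = f x * f y"
  using f_bounded_hom unfolding bounded_ring_hom_def by blast

lemma f_1: "f 1 = 1"
  using f_bounded_hom unfolding bounded_ring_hom_def by blast

lemma f_0 [simp]: "f 0 = 0"
  using f_add[of 0 0] by simp

definition f_bound :: real where
  "f_bound = max 1 (SOME C. \<forall>x. NS (f x) \<le> C * NR x)"

lemma f_bound_pos: "0 < f_bound"
  unfolding f_bound_def by simp

lemma NS_f_le: "NS (f x) \<le> f_bound * NR x"
proof -
  have "\<exists>C. \<forall>x. NS (f x) \<le> C * NR x"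
    using f_bounded_hom unfolding bounded_ring_hom_def by blast
  then have "NS (f x) \<le> (SOME C. \<forall>x. NS (f x) \<le> C * NR x) * NR x" by (rule someI2_ex) blast
  also have "\<dots> \<le> f_bound * NR x"
    unfolding f_bound_def by (rule mult_right_mono) (auto simp: R.N_nonneg)
  finally show ?thesis .
qed

lemma tens_rel_minus: "x \<in> tens_rel d r NR f \<Longrightarrow> (\<lambda>q. - x q) \<in> tens_rel d r NR f"
  using tr_diff[OF tr_zero, of x] by simp

lemma tens_rel_add: "x \<in> tens_rel d r NR f \<Longrightarrow> y \<in> tens_rel d r NR f \<Longrightarrow> (\<lambda>q. x q + y q) \<in> tens_rel d r NR f"
  using tr_diff[OF _ tens_rel_minus, of x y] by simp

definition tequiv :: "(((nat \<Rightarrow> nat) \<Rightarrow> 'r) \<times> 's \<Rightarrow> int) \<Rightarrow> (((nat \<Rightarrow> nat) \<Rightarrow> 'r) \<times> 's \<Rightarrow> int) \<Rightarrow> bool"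
  where "tequiv a b \<longleftrightarrow> (\<lambda>q. a q - b q) \<in> tens_rel d r NR f"

lemma teq_iff_tequiv: "teq d r NR f xs ys \<longleftrightarrow> tequiv (tfree xs) (tfree ys)"
  unfolding teq_def tequiv_def ..

lemma tequiv_refl [simp]: "tequiv a a"
  unfolding tequiv_def using tr_zero by simp

lemma tequiv_sym: "tequiv a b \<Longrightarrow> tequiv b a"
  unfolding tequiv_def using tens_rel_minus[of "\<lambda>q. a q - b q"] by simp

lemma tequiv_trans [trans]: "tequiv a b \<Longrightarrow> tequiv b c \<Longrightarrow> tequiv a c"
  unfolding tequiv_def using tens_rel_add[of "\<lambda>q. a q - b q" "\<lambda>q. b q - c q"] by simp

lemma tequiv_add: "tequiv a a' \<Longrightarrow> tequiv b b' \<Longrightarrow> tequiv (\<lambda>q. a q + b q) (\<lambda>q. a' q + b' q)"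
  unfolding tequiv_def using tens_rel_add[of "\<lambda>q. a q - a' q" "\<lambda>q. b q - b' q"]
  by (simp add: algebra_simps)

lemma tequiv_minus: "tequiv a a' \<Longrightarrow> tequiv (\<lambda>q. - a q) (\<lambda>q. - a' q)"
  unfolding tequiv_def using tens_rel_minus[of "\<lambda>q. a q - a' q"] by (simp add: algebra_simps)

lemma tequiv_sum:
  "finite I \<Longrightarrow> (\<And>i. i \<in> I \<Longrightarrow> tequiv (a i) (b i)) \<Longrightarrow>
   tequiv (\<lambda>q. \<Sum>i\<in>I. a i q) (\<lambda>q. \<Sum>i\<in>I. b i q)"
  by (induction I rule: finite_induct) (auto intro: tequiv_add)

lemma tdelta_add_left:
  assumes "m1 \<in> Dr d r NR" "m2 \<in> Dr d r NR"
  shows "tequiv (tdelta (\<lambda>\<alpha>. m1 \<alpha> + m2 \<alpha>, t)) (\<lambda>q. tdelta (m1, t) q + tdelta (m2, t) q)"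
  using tr_addL[OF assms, of t f] unfolding tequiv_def by (simp add: algebra_simps)

lemma tdelta_add_right:
  assumes "m \<in> Dr d r NR"
  shows "tequiv (tdelta (m, t1 + t2)) (\<lambda>q. tdelta (m, t1) q + tdelta (m, t2) q)"
  using tr_addR[OF assms, of t1 t2 f] unfolding tequiv_def by (simp add: algebra_simps)

lemma tdelta_scal:
  assumes "m \<in> Dr d r NR" shows "tequiv (tdelta (\<lambda>\<alpha>. a * m \<alpha>, t)) (tdelta (m, f a * t))"
  using tr_scal[OF assms] unfolding tequiv_def .

lemma tequiv_zero_if_double:
  assumes "tequiv x (\<lambda>q. x q + x q)" shows "tequiv x (\<lambda>_. 0)"
  using tens_rel_minus[OF assms[unfolded tequiv_def]] unfolding tequiv_def by simp

lemma tdelta_zero_right: "m \<in> Dr d r NR \<Longrightarrow> tequiv (tdelta (m, 0)) (\<lambda>_. 0)"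
  using tdelta_add_right[of m 0 0] by (simp add: tequiv_zero_if_double)

lemma tdelta_zero_left: "tequiv (tdelta (\<lambda>_. 0, t)) (\<lambda>_. 0)"
  using tdelta_add_left[OF R.Dr_zero R.Dr_zero, of t] by (simp add: tequiv_zero_if_double)

lemma tdelta_minus_right:
  assumes m: "m \<in> Dr d r NR" shows "tequiv (tdelta (m, - t)) (\<lambda>q. - tdelta (m, t) q)"
proof -
  have "tequiv (\<lambda>q. tdelta (m, t) q + tdelta (m, - t) q) (tdelta (m, 0))"
    using tequiv_sym[OF tdelta_add_right[OF m, of t "- t"]] by simp
  also have "tequiv \<dots> (\<lambda>_. 0)" by (rule tdelta_zero_right[OF m])
  finally have "tequiv (\<lambda>q. - tdelta (m, t) q + (tdelta (m, t) q + tdelta (m, - t) q))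
      (\<lambda>q. - tdelta (m, t) q + 0)"
    by (intro tequiv_add tequiv_refl)
  then show ?thesis by simp
qed

lemma tdelta_sum_left:
  "finite I \<Longrightarrow> (\<And>i. i \<in> I \<Longrightarrow> m i \<in> Dr d r NR) \<Longrightarrow>
   tequiv (tdelta (\<lambda>\<beta>. \<Sum>i\<in>I. m i \<beta>, t)) (\<lambda>q. \<Sum>i\<in>I. tdelta (m i, t) q)"
proof (induction I rule: finite_induct)
  case empty
  then show ?case using tdelta_zero_left by simp
next
  case (insert i I)
  have "tequiv (tdelta (\<lambda>\<beta>. m i \<beta> + (\<Sum>i\<in>I. m i \<beta>), t))
      (\<lambda>q. tdelta (m i, t) q + tdelta (\<lambda>\<beta>. \<Sum>i\<in>I. m i \<beta>, t) q)"
    using insert by (intro tdelta_add_left R.Dr_sum) auto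
  also have "tequiv \<dots> (\<lambda>q. tdelta (m i, t) q + (\<Sum>i\<in>I. tdelta (m i, t) q))"
    using insert by (intro tequiv_add tequiv_refl) auto
  finally show ?case using insert by simp
qed

lemma tfree_tneg: "xs \<in> tlists d r NR \<Longrightarrow> tequiv (tfree (tneg xs)) (\<lambda>q. - tfree xs q)"
proof (induction xs)
  case (Cons x xs)
  obtain m t where x: "x = (m, t)" by fastforce
  have "tequiv (\<lambda>q. tdelta (m, - t) q + tfree (tneg xs) q) (\<lambda>q. - tdelta (m, t) q + - tfree xs q)"
    using Cons unfolding x by (intro tequiv_add tdelta_minus_right) auto
  then show ?case by (simp add: x tneg_def tfree_Cons)
qed (simp add: tneg_def)

section \<open>The natural map and the tensor norm\<close>

definition tcoeff :: "(nat \<Rightarrow> nat) \<Rightarrow> ((nat \<Rightarrow> nat) \<Rightarrow> 'r) \<times> 's \<Rightarrow> 's" where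
  "tcoeff \<alpha> = (\<lambda>(m, t). f (m \<alpha>) * t)"

text \<open>Only meaningful for finitely supported c: otherwise the sum is the junk value 0.\<close>

definition coeff_map :: "(nat \<Rightarrow> nat) \<Rightarrow> (((nat \<Rightarrow> nat) \<Rightarrow> 'r) \<times> 's \<Rightarrow> int) \<Rightarrow> 's" where
  "coeff_map \<alpha> c = (\<Sum>q\<in>tsupport c. of_int (c q) * tcoeff \<alpha> q)"

lemma coeff_map_eq_sum:
  assumes "finite A" "tsupport c \<subseteq> A"
  shows "coeff_map \<alpha> c = (\<Sum>q\<in>A. of_int (c q) * tcoeff \<alpha> q)"
  unfolding coeff_map_def by (rule sum.mono_neutral_left) (use assms in \<open>auto simp: tsupport_def\<close>)

lemma coeff_map_add:
  assumes "finite (tsupport x)" "finite (tsupport y)"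
  shows "coeff_map \<alpha> (\<lambda>q. x q + y q) = coeff_map \<alpha> x + coeff_map \<alpha> y"
proof -
  let ?A = "tsupport x \<union> tsupport y"
  have "finite ?A" using assms by simp
  then show ?thesis
    by (subst (1 2 3) coeff_map_eq_sum[where A = ?A]) (auto simp: tsupport_def distrib_right sum.distrib)
qed

lemma coeff_map_diff [simp]:
  assumes "finite (tsupport x)" "finite (tsupport y)"
  shows "coeff_map \<alpha> (\<lambda>q. x q - y q) = coeff_map \<alpha> x - coeff_map \<alpha> y"
proof -
  let ?A = "tsupport x \<union> tsupport y"
  have "finite ?A" using assms by simp
  then show ?thesis
    by (subst (1 2 3) coeff_map_eq_sum[where A = ?A]) (auto simp: tsupport_def left_diff_distrib sum_subtractf)
qed

lemma coeff_map_tdelta [simp]: "coeff_map \<alpha> (tdelta a) = tcoeff \<alpha> a"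
  by (subst coeff_map_eq_sum[where A = "{a}"]) (auto simp: tsupport_def tdelta_def)

lemma tens_rel_coeff_map:
  "c \<in> tens_rel d r NR f \<Longrightarrow> finite (tsupport c) \<and> (\<forall>\<alpha>. coeff_map \<alpha> c = 0)"
proof (induction rule: tens_rel.induct)
  case tr_zero
  show ?case by (simp add: coeff_map_def tsupport_def)
next
  case (tr_diff x y)
  then show ?case using finite_support_diff[of x y] by auto
qed (simp_all add: tcoeff_def f_add f_mult ring_distribs ac_simps)

lemma coeff_map_tfree: "coeff_map \<alpha> (tfree xs) = tphi f xs \<alpha>"
proof (induction xs)
  case Nil
  show ?case by (simp add: coeff_map_def tsupport_def tphi_def)
next
  case (Cons x xs)
  then show ?case
    by (simp add: tfree_Cons coeff_map_add finite_support_tfree tphi_def tcoeff_def split: prod.splits)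
qed

lemma tphi_teq:
  assumes "teq d r NR f xs ys" shows "tphi f xs = tphi f ys"
proof
  fix \<alpha>
  have "coeff_map \<alpha> (\<lambda>q. tfree xs q - tfree ys q) = 0"
    using tens_rel_coeff_map assms unfolding teq_def by blast
  then show "tphi f xs \<alpha> = tphi f ys \<alpha>"
    by (simp add: finite_support_tfree coeff_map_tfree)
qed

lemma wnorm_pure_le: "wnorm d r NS (\<lambda>\<alpha>. f (m \<alpha>) * t) \<alpha> \<le> (f_bound * NS t) * wnorm d r NR m \<alpha>"
proof -
  have "NS (f (m \<alpha>) * t) \<le> (f_bound * NR (m \<alpha>)) * NS t"
    using S.N_mult_le mult_right_mono[OF NS_f_le S.N_nonneg] by (rule order_trans)
  then show ?thesis
    unfolding wnorm_def using r_pos by (simp add: mult_right_mono algebra_simps)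
qed

lemma Dr_pure: assumes "m \<in> Dr d r NR" shows "(\<lambda>\<alpha>. f (m \<alpha>) * t) \<in> Dr d r NS"
  by (rule Dr_dominated(1)[OF assms _ wnorm_pure_le])
    (use f_bound_pos S.N_nonneg[of t] in \<open>simp_all add: Dr_vanishes[OF assms]\<close>)

lemma dnorm_pure_le:
  assumes "m \<in> Dr d r NR" shows "dnorm d r NS (\<lambda>\<alpha>. f (m \<alpha>) * t) \<le> f_bound * (dnorm d r NR m * NS t)"
proof -
  have "dnorm d r NS (\<lambda>\<alpha>. f (m \<alpha>) * t) \<le> (f_bound * NS t) * dnorm d r NR m"
    by (rule Dr_dominated(2)[OF assms _ wnorm_pure_le])
      (use f_bound_pos S.N_nonneg[of t] in \<open>simp_all add: Dr_vanishes[OF assms]\<close>)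
  then show ?thesis by (simp add: algebra_simps)
qed

abbreviation pcost :: "((nat \<Rightarrow> nat) \<Rightarrow> 'r) \<times> 's \<Rightarrow> real" where
  "pcost \<equiv> \<lambda>(m, t). dnorm d r NR m * NS t"

lemma tcost_Nil [simp]: "tcost d r NR NS [] = 0"
  unfolding tcost_def by simp

lemma tcost_Cons: "tcost d r NR NS (x # xs) = max (pcost x) (tcost d r NR NS xs)"
proof -
  have "insert 0 (pcost ` set (x # xs)) = insert (pcost x) (insert 0 (pcost ` set xs))" by auto
  then show ?thesis unfolding tcost_def by simp
qed

lemma tcost_nonneg: "0 \<le> tcost d r NR NS xs"
  unfolding tcost_def by (rule Max_ge) auto

lemma tcost_append: "tcost d r NR NS (xs @ ys) = max (tcost d r NR NS xs) (tcost d r NR NS ys)"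
  by (induction xs) (simp_all add: tcost_nonneg tcost_Cons max.assoc)

lemma tcost_le: "(\<And>x. x \<in> set xs \<Longrightarrow> pcost x \<le> B) \<Longrightarrow> 0 \<le> B \<Longrightarrow> tcost d r NR NS xs \<le> B"
  unfolding tcost_def by (rule Max.boundedI) auto

lemma tcost_tneg: "tcost d r NR NS (tneg xs) = tcost d r NR NS xs"
  unfolding tcost_def tneg_def by (simp add: image_image case_prod_unfold)

lemma tphi_Nil [simp]: "tphi f [] = (\<lambda>_. 0)"
  unfolding tphi_def by simp

lemma tphi_Cons: "tphi f ((m, t) # xs) = (\<lambda>\<alpha>. f (m \<alpha>) * t + tphi f xs \<alpha>)"
  unfolding tphi_def by simp

lemma tphi_append: "tphi f (xs @ ys) = (\<lambda>\<alpha>. tphi f xs \<alpha> + tphi f ys \<alpha>)"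
  unfolding tphi_def by simp

lemma tphi_tneg: "tphi f (tneg xs) = (\<lambda>\<alpha>. - tphi f xs \<alpha>)"
  unfolding tphi_def tneg_def by (induction xs) (auto simp: fun_eq_iff case_prod_unfold)

lemma tphi_tdiff: "tphi f (tdiff xs ys) = (\<lambda>\<alpha>. tphi f xs \<alpha> - tphi f ys \<alpha>)"
  unfolding tdiff_def tphi_append tphi_tneg by simp

lemma tphi_tscale: "tphi f (tscale s xs) = (\<lambda>\<alpha>. s * tphi f xs \<alpha>)"
  unfolding tphi_def tscale_def by (induction xs) (auto simp: fun_eq_iff case_prod_unfold algebra_simps)

lemma tphi_Dr: "xs \<in> tlists d r NR \<Longrightarrow> tphi f xs \<in> Dr d r NS"
  by (induction xs) (auto simp: tphi_Cons S.Dr_zero intro: S.Dr_add[OF Dr_pure])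

lemma dnorm_tphi_le_tcost:
  "xs \<in> tlists d r NR \<Longrightarrow> dnorm d r NS (tphi f xs) \<le> f_bound * tcost d r NR NS xs"
proof (induction xs)
  case Nil
  show ?case by (simp add: dnorm_le wnorm_def)
next
  case (Cons x xs)
  obtain m t where x: "x = (m, t)" by fastforce
  have m: "m \<in> Dr d r NR" and xs: "xs \<in> tlists d r NR" using Cons.prems by (auto simp: x)
  have "dnorm d r NS (tphi f (x # xs))
      \<le> max (dnorm d r NS (\<lambda>\<alpha>. f (m \<alpha>) * t)) (dnorm d r NS (tphi f xs))"
    unfolding x tphi_Cons by (rule S.dnorm_add_le_max[OF Dr_pure[OF m] tphi_Dr[OF xs]])
  also have "\<dots> \<le> max (f_bound * (dnorm d r NR m * NS t)) (f_bound * tcost d r NR NS xs)"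
    by (rule max.mono[OF dnorm_pure_le[OF m] Cons.IH[OF xs]])
  also have "\<dots> = f_bound * tcost d r NR NS (x # xs)"
    unfolding x tcost_Cons using f_bound_pos by (simp add: max_mult_distrib_left)
  finally show ?case .
qed

abbreviation tn :: "(((nat \<Rightarrow> nat) \<Rightarrow> 'r) \<times> 's) list \<Rightarrow> real" where
  "tn \<equiv> tnorm d r NR NS f"

lemma tnorm_le_tcost: "ys \<in> tlists d r NR \<Longrightarrow> teq d r NR f ys xs \<Longrightarrow> tn xs \<le> tcost d r NR NS ys"
  unfolding tnorm_def by (rule cInf_lower) (auto intro!: bdd_belowI[of _ 0] simp: tcost_nonneg)

lemma tnorm_greatest:
  "xs \<in> tlists d r NR \<Longrightarrow> (\<And>ys. ys \<in> tlists d r NR \<Longrightarrow> teq d r NR f ys xs \<Longrightarrow> B \<le> tcost d r NR NS ys)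
   \<Longrightarrow> B \<le> tn xs"
  unfolding tnorm_def by (rule cInf_greatest) (auto simp: teq_iff_tequiv)

lemma tnorm_nonneg: "xs \<in> tlists d r NR \<Longrightarrow> 0 \<le> tn xs"
  by (rule tnorm_greatest) (auto simp: tcost_nonneg)

lemma tnorm_approx:
  assumes "xs \<in> tlists d r NR" "\<delta> > 0"
  obtains ys where "ys \<in> tlists d r NR" "teq d r NR f ys xs" "tcost d r NR NS ys < tn xs + \<delta>"
proof -
  let ?X = "tcost d r NR NS ` {ys \<in> tlists d r NR. teq d r NR f ys xs}"
  have "xs \<in> {ys \<in> tlists d r NR. teq d r NR f ys xs}" using assms(1) by (simp add: teq_iff_tequiv)
  then have ne: "?X \<noteq> {}" by blast
  have bd: "bdd_below ?X" by (auto intro!: bdd_belowI[of _ 0] simp: tcost_nonneg)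
  have "Inf ?X < tn xs + \<delta>" using assms(2) unfolding tnorm_def by simp
  then obtain ys where "ys \<in> tlists d r NR" "teq d r NR f ys xs" "tcost d r NR NS ys < tn xs + \<delta>"
    unfolding cInf_less_iff[OF ne bd] by blast
  then show ?thesis by (rule that)
qed

lemma tnorm_cong:
  assumes "tequiv (tfree xs) (tfree xs')" shows "tn xs = tn xs'"
proof -
  have "tequiv (tfree ys) (tfree xs) \<longleftrightarrow> tequiv (tfree ys) (tfree xs')" for ys
    using tequiv_trans[OF _ assms] tequiv_trans[OF _ tequiv_sym[OF assms]] by blast
  then show ?thesis unfolding tnorm_def teq_iff_tequiv by simp
qed

lemma dnorm_tphi_le_tnorm:
  assumes xs: "xs \<in> tlists d r NR" shows "dnorm d r NS (tphi f xs) \<le> f_bound * tn xs"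
proof -
  have "dnorm d r NS (tphi f xs) / f_bound \<le> tn xs"
  proof (rule tnorm_greatest[OF xs])
    fix ys assume ys: "ys \<in> tlists d r NR" "teq d r NR f ys xs"
    have "dnorm d r NS (tphi f xs) \<le> f_bound * tcost d r NR NS ys"
      using dnorm_tphi_le_tcost[OF ys(1)] tphi_teq[OF ys(2)] by simp
    then show "dnorm d r NS (tphi f xs) / f_bound \<le> tcost d r NR NS ys"
      using f_bound_pos by (simp add: divide_le_eq mult.commute)
  qed
  then show ?thesis using f_bound_pos by (simp add: divide_le_eq mult.commute)
qed

lemma tnorm_append_le:
  assumes xs: "xs \<in> tlists d r NR" and ys: "ys \<in> tlists d r NR" shows "tn (xs @ ys) \<le> tn xs + tn ys"
proof (rule field_le_epsilon)
  fix \<delta> :: real assume "\<delta> > 0"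
  then have \<delta>: "\<delta> / 2 > 0" by simp
  obtain xs' where xs': "xs' \<in> tlists d r NR" "teq d r NR f xs' xs" "tcost d r NR NS xs' < tn xs + \<delta> / 2"
    using tnorm_approx[OF xs \<delta>] by blast
  obtain ys' where ys': "ys' \<in> tlists d r NR" "teq d r NR f ys' ys" "tcost d r NR NS ys' < tn ys + \<delta> / 2"
    using tnorm_approx[OF ys \<delta>] by blast
  have "teq d r NR f (xs' @ ys') (xs @ ys)"
    using tequiv_add[OF xs'(2)[unfolded teq_iff_tequiv] ys'(2)[unfolded teq_iff_tequiv]]
    unfolding teq_iff_tequiv tfree_append .
  then have "tn (xs @ ys) \<le> max (tcost d r NR NS xs') (tcost d r NR NS ys')"
    using tnorm_le_tcost[of "xs' @ ys'"] xs'(1) ys'(1) by (simp add: tcost_append)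
  then show "tn (xs @ ys) \<le> tn xs + tn ys + \<delta>"
    using xs'(3) ys'(3) tcost_nonneg[of xs'] tcost_nonneg[of ys'] by linarith
qed

lemma tnorm_tneg_le:
  assumes xs: "xs \<in> tlists d r NR" shows "tn (tneg xs) \<le> tn xs"
proof (rule field_le_epsilon)
  fix \<delta> :: real assume \<delta>: "\<delta> > 0"
  obtain ys where ys: "ys \<in> tlists d r NR" "teq d r NR f ys xs" "tcost d r NR NS ys < tn xs + \<delta>"
    using tnorm_approx[OF xs \<delta>] by blast
  have "tequiv (tfree (tneg ys)) (\<lambda>q. - tfree ys q)" by (rule tfree_tneg[OF ys(1)])
  also have "tequiv \<dots> (\<lambda>q. - tfree xs q)" using ys(2) unfolding teq_iff_tequiv by (rule tequiv_minus)
  also have "tequiv \<dots> (tfree (tneg xs))" by (rule tequiv_sym[OF tfree_tneg[OF xs]])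
  finally have "tn (tneg xs) \<le> tcost d r NR NS (tneg ys)"
    using tlists_tneg[OF ys(1)] by (intro tnorm_le_tcost) (auto simp: teq_iff_tequiv)
  then show "tn (tneg xs) \<le> tn xs + \<delta>" using ys(3) tcost_tneg[of ys] by simp
qed

lemma tnorm_diff_abs_le:
  assumes xs: "xs \<in> tlists d r NR" and ys: "ys \<in> tlists d r NR"
  shows "\<bar>tn xs - tn ys\<bar> \<le> tn (tdiff xs ys)"
proof -
  have diff: "tdiff xs ys \<in> tlists d r NR" by (rule tlists_tdiff[OF xs ys])
  have "tequiv (tfree xs) (\<lambda>q. tfree ys q + (tfree xs q + - tfree ys q))" by simp
  also have "tequiv \<dots> (tfree (ys @ tdiff xs ys))"
    unfolding tdiff_def tfree_append
    by (intro tequiv_add tequiv_refl tequiv_sym[OF tfree_tneg[OF ys]])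
  finally have "tn xs = tn (ys @ tdiff xs ys)" by (rule tnorm_cong)
  then have le1: "tn xs \<le> tn ys + tn (tdiff xs ys)" using tnorm_append_le[OF ys diff] by simp
  have "tequiv (tfree ys) (\<lambda>q. tfree xs q + - (tfree xs q + - tfree ys q))" by simp
  also have "tequiv \<dots> (\<lambda>q. tfree xs q + - tfree (tdiff xs ys) q)"
    unfolding tdiff_def tfree_append
    by (intro tequiv_add tequiv_refl tequiv_minus tequiv_sym[OF tfree_tneg[OF ys]])
  also have "tequiv \<dots> (tfree (xs @ tneg (tdiff xs ys)))"
    unfolding tfree_append by (intro tequiv_add tequiv_refl tequiv_sym[OF tfree_tneg[OF diff]])
  finally have "tn ys = tn (xs @ tneg (tdiff xs ys))" by (rule tnorm_cong)
  then have le2: "tn ys \<le> tn xs + tn (tdiff xs ys)"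
    using tnorm_append_le[OF xs tlists_tneg[OF diff]] tnorm_tneg_le[OF diff] by simp
  show ?thesis using le1 le2 by linarith
qed

definition monomial :: "(nat \<Rightarrow> nat) \<Rightarrow> (nat \<Rightarrow> nat) \<Rightarrow> 'r" where
  "monomial \<alpha> = (\<lambda>\<beta>. if \<beta> = \<alpha> then 1 else 0)"

lemma monomial_Dr:
  assumes "\<alpha> \<in> multi_idx d" shows "monomial \<alpha> \<in> Dr d r NR"
proof (rule DrI)
  show "\<beta> \<notin> multi_idx d \<Longrightarrow> monomial \<alpha> \<beta> = 0" for \<beta>
    using assms unfolding monomial_def by auto
  fix e :: real assume "e > 0"
  then have "{\<beta> \<in> multi_idx d. e \<le> wnorm d r NR (monomial \<alpha>) \<beta>} \<subseteq> {\<alpha>}"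
    by (auto simp: wnorm_def monomial_def)
  then show "finite {\<beta> \<in> multi_idx d. e \<le> wnorm d r NR (monomial \<alpha>) \<beta>}"
    using finite_subset by blast
qed

lemma pcost_monomial_le:
  assumes "y \<in> Dr d r NS" "\<alpha> \<in> multi_idx d"
  shows "pcost (monomial \<alpha>, y \<alpha>) \<le> NR 1 * dnorm d r NS y"
proof -
  have "dnorm d r NR (monomial \<alpha>) \<le> NR 1 * r ^ mdeg d \<alpha>"
    using R.N_nonneg[of 1] r_pos by (intro dnorm_le) (auto simp: wnorm_def monomial_def)
  then have "pcost (monomial \<alpha>, y \<alpha>) \<le> NR 1 * r ^ mdeg d \<alpha> * NS (y \<alpha>)"
    using S.N_nonneg by (simp add: mult_right_mono)
  also have "\<dots> = NR 1 * wnorm d r NS y \<alpha>"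
    by (simp add: wnorm_def)
  also have "\<dots> \<le> NR 1 * dnorm d r NS y"
    using wnorm_le_dnorm[OF assms] R.N_nonneg by (rule mult_left_mono)
  finally show ?thesis .
qed

definition tail_off :: "(nat \<Rightarrow> nat) set \<Rightarrow> ((nat \<Rightarrow> nat) \<Rightarrow> 'r) \<Rightarrow> (nat \<Rightarrow> nat) \<Rightarrow> 'r" where
  "tail_off F m = (\<lambda>\<beta>. if \<beta> \<in> F then 0 else m \<beta>)"

lemma tail_off_Dr: "m \<in> Dr d r NR \<Longrightarrow> tail_off F m \<in> Dr d r NR"
proof -
  have "tail_off F m = (\<lambda>\<beta>. if \<beta> \<notin> F then m \<beta> else 0)" unfolding tail_off_def by auto
  then show "m \<in> Dr d r NR \<Longrightarrow> tail_off F m \<in> Dr d r NR" using R.Dr_restrict by simp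
qed

lemma pcost_tail_off_le:
  assumes small: "\<And>\<alpha>. \<alpha> \<in> multi_idx d \<Longrightarrow> \<alpha> \<notin> F \<Longrightarrow> wnorm d r NR m \<alpha> < \<epsilon> / (1 + NS t)"
    and \<epsilon>: "0 < \<epsilon>"
  shows "pcost (tail_off F m, t) \<le> \<epsilon>"
proof -
  have thr: "0 < \<epsilon> / (1 + NS t)" using \<epsilon> S.N_nonneg[of t] by simp
  have "dnorm d r NR (tail_off F m) \<le> \<epsilon> / (1 + NS t)"
  proof (rule dnorm_le)
    fix \<alpha> assume "\<alpha> \<in> multi_idx d"
    then show "wnorm d r NR (tail_off F m) \<alpha> \<le> \<epsilon> / (1 + NS t)"
      using small[of \<alpha>] thr by (cases "\<alpha> \<in> F") (auto simp: tail_off_def wnorm_def)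
  qed
  then have "pcost (tail_off F m, t) \<le> \<epsilon> / (1 + NS t) * NS t"
    using mult_right_mono S.N_nonneg by fastforce
  also have "\<dots> \<le> \<epsilon>" using \<epsilon> S.N_nonneg[of t] by (simp add: field_simps)
  finally show ?thesis .
qed

lemma monomial_expansion:
  assumes "finite F"
  shows "m = (\<lambda>\<beta>. (\<Sum>\<alpha>\<in>F. m \<alpha> * monomial \<alpha> \<beta>) + tail_off F m \<beta>)"
proof
  fix \<beta>
  have "(\<Sum>\<alpha>\<in>F. m \<alpha> * monomial \<alpha> \<beta>) = (\<Sum>\<alpha>\<in>F. if \<beta> = \<alpha> then m \<alpha> else 0)"
    by (rule sum.cong) (auto simp: monomial_def)
  then show "m \<beta> = (\<Sum>\<alpha>\<in>F. m \<alpha> * monomial \<alpha> \<beta>) + tail_off F m \<beta>"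
    using assms by (simp add: tail_off_def)
qed

lemma tdelta_split:
  assumes m: "m \<in> Dr d r NR" and F: "finite F" "F \<subseteq> multi_idx d"
  shows "tequiv (tdelta (m, t))
    (\<lambda>q. (\<Sum>\<alpha>\<in>F. tdelta (monomial \<alpha>, f (m \<alpha>) * t) q) + tdelta (tail_off F m, t) q)"
proof -
  have mon: "\<And>\<alpha>. \<alpha> \<in> F \<Longrightarrow> monomial \<alpha> \<in> Dr d r NR" using monomial_Dr F(2) by blast
  have head: "(\<lambda>\<beta>. \<Sum>\<alpha>\<in>F. m \<alpha> * monomial \<alpha> \<beta>) \<in> Dr d r NR"
    using F(1) mon by (intro R.Dr_sum R.Dr_mult)
  have "tequiv (tdelta (m, t))
      (\<lambda>q. tdelta (\<lambda>\<beta>. \<Sum>\<alpha>\<in>F. m \<alpha> * monomial \<alpha> \<beta>, t) q + tdelta (tail_off F m, t) q)"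
    using tdelta_add_left[OF head tail_off_Dr[OF m, of F], where t = t]
    unfolding monomial_expansion[OF F(1), of m, symmetric] .
  also have "tequiv \<dots> (\<lambda>q. (\<Sum>\<alpha>\<in>F. tdelta (\<lambda>\<beta>. m \<alpha> * monomial \<alpha> \<beta>, t) q) + tdelta (tail_off F m, t) q)"
    using F(1) mon by (intro tequiv_add tequiv_refl tdelta_sum_left R.Dr_mult)
  also have "tequiv \<dots> (\<lambda>q. (\<Sum>\<alpha>\<in>F. tdelta (monomial \<alpha>, f (m \<alpha>) * t) q) + tdelta (tail_off F m, t) q)"
    using F(1) mon by (intro tequiv_add tequiv_refl tequiv_sum tdelta_scal)
  finally show ?thesis .
qed

lemma tfree_split:
  assumes xs: "xs \<in> tlists d r NR" and F: "finite F" "F \<subseteq> multi_idx d"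
  shows "tequiv (tfree xs) (\<lambda>q. (\<Sum>\<alpha>\<in>F. tdelta (monomial \<alpha>, tphi f xs \<alpha>) q)
    + tfree (map (\<lambda>(m, t). (tail_off F m, t)) xs) q)"
  using xs
proof (induction xs)
  case Nil
  have "tequiv (\<lambda>q. \<Sum>\<alpha>\<in>F. tdelta (monomial \<alpha>, 0) q) (\<lambda>q. \<Sum>\<alpha>\<in>F. 0)"
    using F monomial_Dr by (intro tequiv_sum tdelta_zero_right) auto
  then show ?case using tequiv_sym by simp
next
  case (Cons x xs)
  obtain m t where x: "x = (m, t)" by fastforce
  have m: "m \<in> Dr d r NR" and xs: "xs \<in> tlists d r NR" using Cons.prems by (auto simp: x)
  have mon: "\<And>\<alpha>. \<alpha> \<in> F \<Longrightarrow> monomial \<alpha> \<in> Dr d r NR" using monomial_Dr F(2) by blast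
  let ?tails = "\<lambda>xs. tfree (map (\<lambda>(m, t). (tail_off F m, t)) xs)"
  have "tequiv (tfree (x # xs))
      (\<lambda>q. ((\<Sum>\<alpha>\<in>F. tdelta (monomial \<alpha>, f (m \<alpha>) * t) q) + tdelta (tail_off F m, t) q)
        + ((\<Sum>\<alpha>\<in>F. tdelta (monomial \<alpha>, tphi f xs \<alpha>) q) + ?tails xs q))"
    unfolding x tfree_Cons by (intro tequiv_add tdelta_split[OF m F] Cons.IH[OF xs])
  also have "\<dots> = (\<lambda>q. (\<Sum>\<alpha>\<in>F. tdelta (monomial \<alpha>, f (m \<alpha>) * t) q + tdelta (monomial \<alpha>, tphi f xs \<alpha>) q)
        + ?tails (x # xs) q)"
    by (simp add: x tfree_Cons sum.distrib algebra_simps)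
  also have "tequiv \<dots> (\<lambda>q. (\<Sum>\<alpha>\<in>F. tdelta (monomial \<alpha>, tphi f (x # xs) \<alpha>) q) + ?tails (x # xs) q)"
    unfolding x tphi_Cons
    using F(1) mon by (intro tequiv_add tequiv_refl tequiv_sum tequiv_sym[OF tdelta_add_right])
  finally show ?case .
qed

text \<open>Cut every coefficient family of xs at the finite set F of indices where it is large: the
  heads regroup as sum over F of monomial a (x) (tphi f xs a), the tails cost at most \<epsilon>.\<close>

lemma tnorm_le_dnorm_tphi:
  assumes xs: "xs \<in> tlists d r NR" shows "tn xs \<le> NR 1 * dnorm d r NS (tphi f xs)"
proof (rule field_le_epsilon)
  fix \<epsilon> :: real assume \<epsilon>: "\<epsilon> > 0"
  define F where "F = (\<Union>(m, t)\<in>set xs. {\<alpha> \<in> multi_idx d. \<epsilon> / (1 + NS t) \<le> wnorm d r NR m \<alpha>})"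
  have F: "finite F" "F \<subseteq> multi_idx d"
    using xs \<epsilon> S.N_nonneg unfolding F_def tlists_def
    by (auto intro!: finite_wnorm_ge divide_pos_pos add_pos_nonneg)
  obtain L where L: "distinct L" "set L = F" using finite_distinct_list[OF F(1)] by blast
  define ys where "ys = map (\<lambda>\<alpha>. (monomial \<alpha>, tphi f xs \<alpha>)) L @ map (\<lambda>(m, t). (tail_off F m, t)) xs"
  have ys: "ys \<in> tlists d r NR"
    using xs F(2) L(2) monomial_Dr tail_off_Dr unfolding ys_def tlists_def by auto
  have "teq d r NR f ys xs"
    using tequiv_sym[OF tfree_split[OF xs F]]
    unfolding teq_iff_tequiv ys_def tfree_append tfree_map_distinct[OF L(1)] L(2) .
  then have "tn xs \<le> tcost d r NR NS ys" by (rule tnorm_le_tcost[OF ys])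
  also have "\<dots> \<le> NR 1 * dnorm d r NS (tphi f xs) + \<epsilon>"
  proof (rule tcost_le)
    have bound_nonneg: "0 \<le> NR 1 * dnorm d r NS (tphi f xs)"
      using R.N_nonneg S.dnorm_nonneg[OF tphi_Dr[OF xs]] by simp
    then show "0 \<le> NR 1 * dnorm d r NS (tphi f xs) + \<epsilon>" using \<epsilon> by simp
    fix y assume "y \<in> set ys"
    then consider (head) \<alpha> where "\<alpha> \<in> F" "y = (monomial \<alpha>, tphi f xs \<alpha>)"
      | (tail) m t where "(m, t) \<in> set xs" "y = (tail_off F m, t)"
      unfolding ys_def using L(2) by auto
    then show "pcost y \<le> NR 1 * dnorm d r NS (tphi f xs) + \<epsilon>"
    proof cases
      case head
      then have "pcost y \<le> NR 1 * dnorm d r NS (tphi f xs)"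
        using pcost_monomial_le[OF tphi_Dr[OF xs]] F(2) by auto
      then show ?thesis using \<epsilon> by simp
    next
      case tail
      have "pcost y \<le> \<epsilon>"
        unfolding tail(2) by (rule pcost_tail_off_le) (use tail(1) \<epsilon> in \<open>auto simp: F_def not_le\<close>)
      then show ?thesis using bound_nonneg by linarith
    qed
  qed
  finally show "tn xs \<le> NR 1 * dnorm d r NS (tphi f xs) + \<epsilon>" .
qed


section \<open>Extension to the completion\<close>

lemma tendsto_0_if_le:
  fixes g h :: "nat \<Rightarrow> real"
  assumes "\<And>n. 0 \<le> g n" "\<And>n. g n \<le> h n" "h \<longlonglongrightarrow> 0"
  shows "g \<longlonglongrightarrow> 0"
  by (rule real_tendsto_sandwich[of "\<lambda>_. 0" g sequentially h]) (use assms in auto)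

lemma tcauchy_tlists: "tcauchy d r NR NS f u \<Longrightarrow> u n \<in> tlists d r NR"
  unfolding tcauchy_def by blast

lemma ddist_tphi_le:
  "xs \<in> tlists d r NR \<Longrightarrow> ys \<in> tlists d r NR \<Longrightarrow> S.ddist (tphi f xs) (tphi f ys) \<le> f_bound * tn (tdiff xs ys)"
  using dnorm_tphi_le_tnorm[OF tlists_tdiff] unfolding tphi_tdiff .

lemma tnorm_tdiff_le:
  "xs \<in> tlists d r NR \<Longrightarrow> ys \<in> tlists d r NR \<Longrightarrow> tn (tdiff xs ys) \<le> NR 1 * S.ddist (tphi f xs) (tphi f ys)"
  using tnorm_le_dnorm_tphi[OF tlists_tdiff] unfolding tphi_tdiff .

lemma tnorm_tdiff_le_via:
  assumes "xs \<in> tlists d r NR" "ys \<in> tlists d r NR" "y \<in> Dr d r NS"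
  shows "tn (tdiff xs ys) \<le> NR 1 * (S.ddist (tphi f xs) y + S.ddist (tphi f ys) y)"
proof -
  have "S.ddist (tphi f xs) (tphi f ys) \<le> S.ddist (tphi f xs) y + S.ddist (tphi f ys) y"
    using S.ddist_triangle[OF tphi_Dr[OF assms(1)] assms(3) tphi_Dr[OF assms(2)]] S.ddist_commute
    by simp
  then show ?thesis
    using tnorm_tdiff_le[OF assms(1,2)] mult_left_mono[OF _ R.N_nonneg] order_trans by blast
qed

lemma tphi_monomials:
  assumes "distinct L"
  shows "tphi f (map (\<lambda>\<alpha>. (monomial \<alpha>, y \<alpha>)) L) = (\<lambda>\<beta>. if \<beta> \<in> set L then y \<beta> else 0)"
  using assms by (induction L) (auto simp: tphi_Cons monomial_def f_1)

lemma tcauchy_if_tphi_tendsto: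
  assumes u: "\<And>n. u n \<in> tlists d r NR" and y: "y \<in> Dr d r NS"
    and lim: "(\<lambda>n. S.ddist (tphi f (u n)) y) \<longlonglongrightarrow> 0"
  shows "tcauchy d r NR NS f u"
  unfolding tcauchy_def
proof (intro conjI allI impI u)
  fix e :: real assume e: "e > 0"
  define c where "c = NR 1 + 1"
  have c: "c > 0" unfolding c_def using R.N_nonneg[of 1] by simp
  obtain K where "\<forall>n\<ge>K. norm (S.ddist (tphi f (u n)) y - 0) < e / (2 * c)"
    using LIMSEQ_D[OF lim, of "e / (2 * c)"] e c by auto
  then have K: "\<And>n. n \<ge> K \<Longrightarrow> S.ddist (tphi f (u n)) y < e / (2 * c)"
    by (auto simp: abs_less_iff)
  have "tn (tdiff (u m) (u n)) < e" if "m \<ge> K" "n \<ge> K" for m n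
  proof -
    have "tn (tdiff (u m) (u n)) \<le> NR 1 * (S.ddist (tphi f (u m)) y + S.ddist (tphi f (u n)) y)"
      by (rule tnorm_tdiff_le_via[OF u u y])
    also have "\<dots> \<le> c * (S.ddist (tphi f (u m)) y + S.ddist (tphi f (u n)) y)"
      unfolding c_def using S.ddist_nonneg[OF tphi_Dr[OF u] y] by (intro mult_right_mono) auto
    also have "\<dots> < c * (e / (2 * c) + e / (2 * c))"
      using K that c by (intro mult_strict_left_mono add_strict_mono) auto
    also have "\<dots> = e" using c by (simp add: field_simps)
    finally show ?thesis .
  qed
  then show "\<exists>K. \<forall>m\<ge>K. \<forall>n\<ge>K. tn (tdiff (u m) (u n)) < e" by blast
qed

lemma nat_map_unique:
  assumes "nat_map d r NR NS f u y" "nat_map d r NR NS f u y'" "\<And>n. u n \<in> tlists d r NR"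
  shows "y = y'"
proof -
  have y: "y \<in> Dr d r NS" and y': "y' \<in> Dr d r NS"
    and lim: "(\<lambda>n. S.ddist (tphi f (u n)) y + S.ddist (tphi f (u n)) y') \<longlonglongrightarrow> 0"
    using assms(1,2) tendsto_add[of _ 0 _ _ 0] unfolding nat_map_def by auto
  have "S.ddist y y' \<le> S.ddist (tphi f (u n)) y + S.ddist (tphi f (u n)) y'" for n
    using S.ddist_triangle[OF y tphi_Dr[OF assms(3)] y'] S.ddist_commute by simp
  then have "S.ddist y y' \<le> 0" by (intro LIMSEQ_le_const[OF lim]) auto
  then show ?thesis by (rule S.ddist_le_0_imp_eq[OF y y'])
qed

lemma nat_map_exists:
  assumes u: "tcauchy d r NR NS f u" shows "\<exists>y. nat_map d r NR NS f u y"
proof -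
  have "\<exists>y \<in> Dr d r NS. (\<lambda>n. S.ddist (tphi f (u n)) y) \<longlonglongrightarrow> 0"
  proof (rule S.Dr_complete[OF NS_complete tphi_Dr[OF tcauchy_tlists[OF u]]])
    fix e :: real assume e: "e > 0"
    then obtain K where K: "\<forall>m\<ge>K. \<forall>n\<ge>K. tn (tdiff (u m) (u n)) < e / f_bound"
      using u f_bound_pos unfolding tcauchy_def by (meson divide_pos_pos)
    have "S.ddist (tphi f (u m)) (tphi f (u n)) < e" if "m \<ge> K" "n \<ge> K" for m n
    proof -
      have "S.ddist (tphi f (u m)) (tphi f (u n)) \<le> f_bound * tn (tdiff (u m) (u n))"
        using ddist_tphi_le tcauchy_tlists[OF u] by blast
      also have "\<dots> < f_bound * (e / f_bound)"
        using K that f_bound_pos by (intro mult_strict_left_mono) auto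
      finally show ?thesis using f_bound_pos by simp
    qed
    then show "\<exists>K. \<forall>m\<ge>K. \<forall>n\<ge>K. S.ddist (tphi f (u m)) (tphi f (u n)) < e" by blast
  qed
  then show ?thesis unfolding nat_map_def by blast
qed

lemma nat_map_cequiv:
  assumes u: "\<And>n. u n \<in> tlists d r NR" and v: "\<And>n. v n \<in> tlists d r NR"
    and uv: "cequiv d r NR NS f u v" and y: "nat_map d r NR NS f u y"
  shows "nat_map d r NR NS f v y"
proof -
  have yD: "y \<in> Dr d r NS" and lim: "(\<lambda>n. S.ddist (tphi f (u n)) y) \<longlonglongrightarrow> 0"
    using y unfolding nat_map_def by auto
  have "S.ddist (tphi f (v n)) y \<le> f_bound * tn (tdiff (u n) (v n)) + S.ddist (tphi f (u n)) y" for n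
    using S.ddist_triangle[OF tphi_Dr[OF v[of n]] tphi_Dr[OF u[of n]] yD] ddist_tphi_le[OF u[of n] v[of n]]
      S.ddist_commute[of "tphi f (v n)" "tphi f (u n)"] by simp
  moreover have "(\<lambda>n. f_bound * tn (tdiff (u n) (v n)) + S.ddist (tphi f (u n)) y) \<longlonglongrightarrow> 0"
    using tendsto_add[OF tendsto_mult_right_zero[OF uv[unfolded cequiv_def]] lim] by simp
  ultimately have "(\<lambda>n. S.ddist (tphi f (v n)) y) \<longlonglongrightarrow> 0"
    by (intro tendsto_0_if_le[OF S.ddist_nonneg[OF tphi_Dr[OF v] yD]])
  then show ?thesis using yD unfolding nat_map_def by blast
qed

lemma cequiv_if_nat_map:
  assumes u: "\<And>n. u n \<in> tlists d r NR" and v: "\<And>n. v n \<in> tlists d r NR"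
    and uy: "nat_map d r NR NS f u y" and vy: "nat_map d r NR NS f v y"
  shows "cequiv d r NR NS f u v"
proof -
  have yD: "y \<in> Dr d r NS"
    and lim: "(\<lambda>n. NR 1 * (S.ddist (tphi f (u n)) y + S.ddist (tphi f (v n)) y)) \<longlonglongrightarrow> 0"
    using uy vy tendsto_mult_right_zero[OF tendsto_add_zero] unfolding nat_map_def by auto
  show ?thesis
    unfolding cequiv_def
    by (rule tendsto_0_if_le[OF tnorm_nonneg[OF tlists_tdiff[OF u v]] tnorm_tdiff_le_via[OF u v yD] lim])
qed

lemma nat_map_surj:
  assumes y: "y \<in> Dr d r NS" shows "\<exists>u. tcauchy d r NR NS f u \<and> nat_map d r NR NS f u y"
proof -
  define F where "F n = {\<alpha> \<in> multi_idx d. inverse (real (Suc n)) \<le> wnorm d r NS y \<alpha>}" for n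
  have "finite (F n)" for n unfolding F_def by (rule finite_wnorm_ge[OF y]) simp
  then have "\<exists>L. distinct L \<and> set L = F n" for n using finite_distinct_list by blast
  then obtain L where L: "\<And>n. distinct (L n)" "\<And>n. set (L n) = F n" by metis
  define u where "u n = map (\<lambda>\<alpha>. (monomial \<alpha>, y \<alpha>)) (L n)" for n
  have u: "u n \<in> tlists d r NR" for n
    unfolding u_def tlists_def using L(2) monomial_Dr by (auto simp: F_def)
  have "S.ddist (tphi f (u n)) y \<le> inverse (real (Suc n))" for n
    unfolding u_def tphi_monomials[OF L(1)] L(2)
    by (rule dnorm_le) (auto simp: F_def wnorm_def not_le less_imp_le)
  then have lim: "(\<lambda>n. S.ddist (tphi f (u n)) y) \<longlonglongrightarrow> 0"
    by (rule tendsto_0_if_le[OF S.ddist_nonneg[OF tphi_Dr[OF u] y] _ LIMSEQ_inverse_real_of_nat])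
  show ?thesis
    using tcauchy_if_tphi_tendsto[OF u y lim] lim y unfolding nat_map_def by blast
qed

lemma nat_map_append:
  assumes u: "\<And>n. u n \<in> tlists d r NR" and v: "\<And>n. v n \<in> tlists d r NR"
    and uy: "nat_map d r NR NS f u y" and vz: "nat_map d r NR NS f v z"
  shows "nat_map d r NR NS f (\<lambda>n. u n @ v n) (\<lambda>\<alpha>. y \<alpha> + z \<alpha>)"
proof -
  have yD: "y \<in> Dr d r NS" and zD: "z \<in> Dr d r NS"
    and lim: "(\<lambda>n. S.ddist (tphi f (u n)) y + S.ddist (tphi f (v n)) z) \<longlonglongrightarrow> 0"
    using uy vz tendsto_add_zero unfolding nat_map_def by auto
  have "S.ddist (tphi f (u n @ v n)) (\<lambda>\<alpha>. y \<alpha> + z \<alpha>)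
      \<le> max (S.ddist (tphi f (u n)) y) (S.ddist (tphi f (v n)) z)" for n
    using S.dnorm_add_le_max[OF S.Dr_diff[OF tphi_Dr[OF u] yD] S.Dr_diff[OF tphi_Dr[OF v] zD]]
    by (simp add: tphi_append algebra_simps)
  also have "max (S.ddist (tphi f (u n)) y) (S.ddist (tphi f (v n)) z)
      \<le> S.ddist (tphi f (u n)) y + S.ddist (tphi f (v n)) z" for n
    using S.ddist_nonneg[OF tphi_Dr[OF u] yD] S.ddist_nonneg[OF tphi_Dr[OF v] zD] by simp
  finally have "(\<lambda>n. S.ddist (tphi f (u n @ v n)) (\<lambda>\<alpha>. y \<alpha> + z \<alpha>)) \<longlonglongrightarrow> 0"
    using S.Dr_add[OF yD zD] u v
    by (intro tendsto_0_if_le[OF S.ddist_nonneg _ lim] tphi_Dr) auto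
  then show ?thesis using S.Dr_add[OF yD zD] unfolding nat_map_def by blast
qed

lemma nat_map_tscale:
  assumes u: "\<And>n. u n \<in> tlists d r NR" and uy: "nat_map d r NR NS f u y"
  shows "nat_map d r NR NS f (\<lambda>n. tscale s (u n)) (\<lambda>\<alpha>. s * y \<alpha>)"
proof -
  have yD: "y \<in> Dr d r NS" and lim: "(\<lambda>n. NS s * S.ddist (tphi f (u n)) y) \<longlonglongrightarrow> 0"
    using uy tendsto_mult_right_zero unfolding nat_map_def by auto
  have "S.ddist (tphi f (tscale s (u n))) (\<lambda>\<alpha>. s * y \<alpha>) \<le> NS s * S.ddist (tphi f (u n)) y" for n
    using S.dnorm_mult_le[OF S.Dr_diff[OF tphi_Dr[OF u] yD], of s]
    by (simp add: tphi_tscale algebra_simps)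
  then have "(\<lambda>n. S.ddist (tphi f (tscale s (u n))) (\<lambda>\<alpha>. s * y \<alpha>)) \<longlonglongrightarrow> 0"
    using S.Dr_mult[OF yD] tlists_tscale[OF u]
    by (intro tendsto_0_if_le[OF S.ddist_nonneg _ lim] tphi_Dr) auto
  then show ?thesis using S.Dr_mult[OF yD] unfolding nat_map_def by blast
qed

lemma tnorm_tendsto_cnorm:
  assumes u: "tcauchy d r NR NS f u" shows "(\<lambda>n. tn (u n)) \<longlonglongrightarrow> cnorm d r NR NS f u"
proof -
  have "Cauchy (\<lambda>n. tn (u n))"
  proof (rule CauchyI)
    fix e :: real assume "0 < e"
    then obtain K where K: "\<forall>m\<ge>K. \<forall>n\<ge>K. tn (tdiff (u m) (u n)) < e"
      using u unfolding tcauchy_def by blast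
    then have "norm (tn (u m) - tn (u n)) < e" if "m \<ge> K" "n \<ge> K" for m n
      using tnorm_diff_abs_le[OF tcauchy_tlists[OF u] tcauchy_tlists[OF u], of m n] that by fastforce
    then show "\<exists>M. \<forall>m\<ge>M. \<forall>n\<ge>M. norm (tn (u m) - tn (u n)) < e" by blast
  qed
  then show ?thesis unfolding cnorm_def by (simp add: Cauchy_convergent_iff convergent_LIMSEQ_iff)
qed

lemma dnorm_tendsto:
  assumes u: "\<And>n. u n \<in> tlists d r NR" and uy: "nat_map d r NR NS f u y"
  shows "(\<lambda>n. dnorm d r NS (tphi f (u n))) \<longlonglongrightarrow> dnorm d r NS y"
proof -
  have yD: "y \<in> Dr d r NS" and lim: "(\<lambda>n. S.ddist (tphi f (u n)) y) \<longlonglongrightarrow> 0"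
    using uy unfolding nat_map_def by auto
  have "(\<lambda>n. dnorm d r NS (tphi f (u n)) - dnorm d r NS y) \<longlonglongrightarrow> 0"
    by (rule Lim_null_comparison[OF _ lim]) (simp add: S.dnorm_diff_abs_le[OF tphi_Dr[OF u] yD])
  then show ?thesis by (simp add: LIM_zero_iff)
qed

lemma dnorm_le_cnorm:
  assumes u: "tcauchy d r NR NS f u" and uy: "nat_map d r NR NS f u y"
  shows "dnorm d r NS y \<le> f_bound * cnorm d r NR NS f u"
  using dnorm_tendsto[OF tcauchy_tlists[OF u] uy] tendsto_mult_left[OF tnorm_tendsto_cnorm[OF u]]
  by (rule LIMSEQ_le) (use dnorm_tphi_le_tnorm tcauchy_tlists[OF u] in blast)

lemma cnorm_le_dnorm:
  assumes u: "tcauchy d r NR NS f u" and uy: "nat_map d r NR NS f u y"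
  shows "cnorm d r NR NS f u \<le> NR 1 * dnorm d r NS y"
  using tnorm_tendsto_cnorm[OF u] tendsto_mult_left[OF dnorm_tendsto[OF tcauchy_tlists[OF u] uy]]
  by (rule LIMSEQ_le) (use tnorm_le_dnorm_tphi tcauchy_tlists[OF u] in blast)

theorem natural_map_iso: "natural_map_iso d r NR NS f"
  unfolding natural_map_iso_def
proof (intro conjI allI impI ballI)
  fix u assume "tcauchy d r NR NS f u"
  then show "\<exists>!y. nat_map d r NR NS f u y"
    using nat_map_exists nat_map_unique tcauchy_tlists by metis
next
  fix u v y
  assume "tcauchy d r NR NS f u \<and> tcauchy d r NR NS f v \<and> cequiv d r NR NS f u v \<and> nat_map d r NR NS f u y"
  then show "nat_map d r NR NS f v y" using nat_map_cequiv tcauchy_tlists by blast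
next
  fix u v y
  assume "tcauchy d r NR NS f u \<and> tcauchy d r NR NS f v \<and> nat_map d r NR NS f u y \<and> nat_map d r NR NS f v y"
  then show "cequiv d r NR NS f u v" using cequiv_if_nat_map tcauchy_tlists by blast
next
  fix y assume "y \<in> Dr d r NS"
  then show "\<exists>u. tcauchy d r NR NS f u \<and> nat_map d r NR NS f u y" by (rule nat_map_surj)
next
  fix u v y z s
  assume "tcauchy d r NR NS f u \<and> tcauchy d r NR NS f v \<and> nat_map d r NR NS f u y \<and> nat_map d r NR NS f v z"
  then show "nat_map d r NR NS f (\<lambda>n. u n @ v n) (\<lambda>\<alpha>. y \<alpha> + z \<alpha>)"
    using nat_map_append tcauchy_tlists by blast
next
  fix u v y z s
  assume "tcauchy d r NR NS f u \<and> tcauchy d r NR NS f v \<and> nat_map d r NR NS f u y \<and> nat_map d r NR NS f v z"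
  then show "nat_map d r NR NS f (\<lambda>n. tscale s (u n)) (\<lambda>\<alpha>. s * y \<alpha>)"
    using nat_map_tscale tcauchy_tlists by blast
next
  show "\<exists>C. \<forall>u y. tcauchy d r NR NS f u \<and> nat_map d r NR NS f u y \<longrightarrow> dnorm d r NS y \<le> C * cnorm d r NR NS f u"
    using dnorm_le_cnorm by blast
next
  show "\<exists>C. \<forall>u y. tcauchy d r NR NS f u \<and> nat_map d r NR NS f u y \<longrightarrow> cnorm d r NR NS f u \<le> C * dnorm d r NS y"
    using cnorm_le_dnorm by blast
qed

end

theorem mainTheorem8:
  fixes p :: nat and G :: "('g, 'b) monoid_scheme" and T :: "'g topology"
    and d :: nat and g :: "nat \<Rightarrow> 'g"
    and NR :: "'r::comm_ring_1 \<Rightarrow> real" and iR :: "(nat \<Rightarrow> int) \<Rightarrow> 'r"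
    and NS :: "'s::comm_ring_1 \<Rightarrow> real" and iS :: "(nat \<Rightarrow> int) \<Rightarrow> 's"
    and f :: "'r \<Rightarrow> 's" and w :: 'r and r :: real
  assumes "prime p"
    and "uniform_pro_p p G T"
    and "min_top_generators G T d g"
    and "banach_tate_zp p NR iR"
    and "banach_tate_zp p NS iS"
    and "bounded_ring_hom NR NS f"
    and "mult_pseudo_unif NR w"
    and "mult_elem NS (f w)"
    and "1 / real p \<le> r" and "r < 1"
  shows "natural_map_iso d r NR NS f"
proof -
  have "nonarch_norm NR" using assms(4) unfolding banach_tate_zp_def by blast
  moreover have "nonarch_norm NS" "norm_complete NS" using assms(5) unfolding banach_tate_zp_def by blast+
  moreover have "r > 0"
    using assms(9) prime_gt_0_nat[OF assms(1)] by (smt (verit) divide_pos_pos of_nat_0_less_iff)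
  ultimately interpret natural_map_setting d r NR NS f
    using assms(6) by unfold_locales
  show ?thesis by (rule natural_map_iso)
qed

end
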